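(* With the construction described in the context, as $N\to+\infty$, $$\frac{1}{\sum_{n\in\mathbb{N}}f(n)^2}\sum_{\substack{n\in\mathbb{N}\\ n\notin\mathcal{M}}}\frac{f(n)h(n)}{n^{\sigma}}\sum_{q\mid n}f(q)q^{\sigma}=o(\mathcal{A}_N).$$
   Context: Notation: $\log_2 x=\log\log x$, $\log_3 x=\log\log\log x$. Fix $A>0$. Let $N$ be a large parameter and $\sigma=\frac12+\frac{A}{\log_2 N}$. Fix $\gamma\in(0,(e-1)^{-1})$. Let $\mathcal{P}$ be the set of primes $p$ with $e\log N\log_2 N<p\le \exp((\log_2 N)^{\gamma})\log N\log_2 N$. Let $f$ be the multiplicative function supported on squarefree integers (so $f(1)=1$) with $f(p)=\dfrac{(\log N)^{1-\sigma}(\log_2 N)^{\sigma}}{(\log_3 N)^{1-\sigma}}\cdot\dfrac{1}{p^{\sigma}(\log p-\log_2 N-\log_3 N)}$ for $p\in\mathcal{P}$ and $f(p)=0$ for primes $p\notin\mathcal{P}$. For $k\in\{1,\dots,\lfloor(\log_2N)^{\gamma}\rfloor\}$ let $\mathcal{P}_k$ be the set of primes $p$ with $e^k\log N\log_2N<p\le e^{k+1}\log N\log_2 N$. Fix a real number $a$ with $e-1<a<1/\gamma$, put $\Delta_k=\dfrac{a(\log N)^{2-2\sigma}}{k^2(\log_3N)^{2-2\sigma}}$, and let $\mathcal{M}_k$ be the set of $n\in\operatorname{supp}(f)$ having at least $\Delta_k$ prime divisors in $\mathcal{P}_k$. Set $\mathcal{M}=\operatorname{supp}(f)\setminus\bigcup_{k=1}^{\lfloor(\log_2N)^{\gamma}\rfloor}\mathcal{M}_k$.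 Let $h$ be the multiplicative function $h(n)=\prod_{p\mid n}\frac{p}{p+1}$ ($h(1)=1$). Define $$\mathcal{A}_N=\frac{1}{\sum_{n\in\mathbb{N}}f(n)^2}\sum_{n\in\mathbb{N}}\frac{f(n)h(n)}{n^{\sigma}}\sum_{q\mid n}f(q)q^{\sigma}=\prod_{p\in\mathcal{P}}\frac{1+f(p)^2h(p)+f(p)h(p)p^{-\sigma}}{1+f(p)^2}.$$ *)

theory Defs
  imports "HOL-Analysis.Analysis" "HOL-Library.Landau_Symbols"
          "HOL-Computational_Algebra.Squarefree"
begin

(* Parameters: AA = the constant A > 0, gam = gamma, a = the constant a; N = the large parameter.
   log_2 N = ln (ln N), log_3 N = ln (ln (ln N)); all logarithms are natural. *)

definition sig :: "real \<Rightarrow> real \<Rightarrow> real" where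
  "sig AA N = 1/2 + AA / ln (ln N)"

definition PP :: "real \<Rightarrow> real \<Rightarrow> nat set" where
  "PP gam N = {p. prime p \<and> exp 1 * ln N * ln (ln N) < real p
                 \<and> real p \<le> exp (ln (ln N) powr gam) * ln N * ln (ln N)}"

definition fp :: "real \<Rightarrow> real \<Rightarrow> nat \<Rightarrow> real" where
  "fp AA N p = (ln N powr (1 - sig AA N) * ln (ln N) powr (sig AA N)
                 / ln (ln (ln N)) powr (1 - sig AA N))
              * (1 / (real p powr (sig AA N) * (ln (real p) - ln (ln N) - ln (ln (ln N)))))"

definition suppf :: "real \<Rightarrow> real \<Rightarrow> nat set" where
  "suppf gam N = {n. n \<ge> 1 \<and> squarefree n \<and> prime_factors n \<subseteq> PP gam N}"

definition ff :: "real \<Rightarrow> real \<Rightarrow> real \<Rightarrow> nat \<Rightarrow> real" where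
  "ff AA gam N n = (if n \<in> suppf gam N then (\<Prod>p\<in>prime_factors n. fp AA N p) else 0)"

definition hh :: "nat \<Rightarrow> real" where
  "hh n = (\<Prod>p\<in>prime_factors n. real p / (real p + 1))"

definition Pk :: "real \<Rightarrow> nat \<Rightarrow> nat set" where
  "Pk N k = {p. prime p \<and> exp (real k) * ln N * ln (ln N) < real p
               \<and> real p \<le> exp (real k + 1) * ln N * ln (ln N)}"

definition Delta :: "real \<Rightarrow> real \<Rightarrow> real \<Rightarrow> nat \<Rightarrow> real" where
  "Delta AA a N k = a * ln N powr (2 - 2 * sig AA N)
                    / ((real k)\<^sup>2 * ln (ln (ln N)) powr (2 - 2 * sig AA N))"

definition Mk :: "real \<Rightarrow> real \<Rightarrow> real \<Rightarrow> real \<Rightarrow> nat \<Rightarrow> nat set" where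
  "Mk AA gam a N k = {n \<in> suppf gam N. real (card (prime_factors n \<inter> Pk N k)) \<ge> Delta AA a N k}"

definition MM :: "real \<Rightarrow> real \<Rightarrow> real \<Rightarrow> real \<Rightarrow> nat set" where
  "MM AA gam a N = suppf gam N -
     (\<Union>k\<in>{1..nat \<lfloor>ln (ln N) powr gam\<rfloor>}. Mk AA gam a N k)"

definition term_n :: "real \<Rightarrow> real \<Rightarrow> real \<Rightarrow> nat \<Rightarrow> real" where
  "term_n AA gam N n = ff AA gam N n * hh n / real n powr (sig AA N)
       * (\<Sum>q\<in>{q. q dvd n}. ff AA gam N q * real q powr (sig AA N))"

definition AN :: "real \<Rightarrow> real \<Rightarrow> real \<Rightarrow> real" where
  "AN AA gam N = (\<Sum>\<^sub>\<infinity>n\<in>{n. n \<ge> 1}. term_n AA gam N n)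
                 / (\<Sum>\<^sub>\<infinity>n\<in>{n. n \<ge> 1}. (ff AA gam N n)\<^sup>2)"

end

(*
  Writing each n in the support of f as the product of a set T of primes of PP, the summand
  becomes multiplicative, with value term_prime at p: the full sum is the Euler product of the
  factors 1 + term_prime p, and the sum over n outside MM is the sum of the products of term_prime
  over the sets T containing at least Delta_k primes of some block Pk. For one block, Rankin's
  trick bounds this partial sum by exp (- (rho - 1 - ln rho) Delta_k) times the Euler product, as
  soon as the sum of term_prime over Pk is at most rho Delta_k for some rho < 1. That mean bound
  comes from the Chebyshev-type estimate: the sum of 1/p over x < p <= e x is at most 1.7 / ln x,
  and rho < 1 is possible because a > e - 1 > 1.7. Since
  Delta_k >> ln N / ((ln ln N)^2 ln ln ln N), the union over the at most ln ln N blocks is still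
  o(1) times the Euler product.
*)
theory Submission
  imports Defs "HOL-Real_Asymp.Real_Asymp"
begin

section \<open>Chebyshev's bounds for \<open>\<theta>\<close>\<close>

lemma card_prime_power_divisors:
  assumes "prime (p::nat)" "m > 0" "multiplicity p m \<le> K"
  shows "card {k\<in>{1..K}. p ^ k dvd m} = multiplicity p m"
proof -
  have iff: "p ^ k dvd m \<longleftrightarrow> k \<le> multiplicity p m" for k
    using power_dvd_iff_le_multiplicity[of m p] assms prime_gt_1_nat[of p] by auto
  have "{k\<in>{1..K}. p ^ k dvd m} = {1..multiplicity p m}"
    unfolding iff using assms(3) by auto
  thus ?thesis by simp
qed

lemma multiplicity_less_self:
  assumes "prime (p::nat)" "m > 0"
  shows "multiplicity p m < m"
proof -
  have "p ^ multiplicity p m dvd m" by (rule multiplicity_dvd)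
  hence "p ^ multiplicity p m \<le> m" using assms by (simp add: dvd_imp_le)
  moreover have "multiplicity p m < 2 ^ multiplicity p m" by (rule less_exp)
  moreover have "2 ^ multiplicity p m \<le> p ^ multiplicity p m"
    using assms prime_ge_2_nat power_mono by blast
  ultimately show ?thesis by linarith
qed

lemma multiplicity_fact_eq_sum_div:
  assumes "prime (p::nat)" "n \<le> K"
  shows "multiplicity p (fact n :: nat) = (\<Sum>k\<in>{1..K}. n div p ^ k)"
  using assms(2)
proof (induction n)
  case 0
  then show ?case by simp
next
  case (Suc n)
  have "multiplicity p (fact (Suc n) :: nat) = multiplicity p (Suc n) + multiplicity p (fact n :: nat)"
    unfolding fact_Suc of_nat_id using assms(1)
    by (intro prime_elem_multiplicity_mult_distrib) auto
  also have "multiplicity p (Suc n) = card {k\<in>{1..K}. p ^ k dvd Suc n}"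
    using assms(1) Suc.prems multiplicity_less_self[of p "Suc n"]
    by (intro card_prime_power_divisors[symmetric]) auto
  also have "multiplicity p (fact n :: nat) = (\<Sum>k\<in>{1..K}. n div p ^ k)"
    using Suc by simp
  also have "card {k\<in>{1..K}. p ^ k dvd Suc n} + \<dots>
      = (\<Sum>k\<in>{1..K}. (if p ^ k dvd Suc n then 1 else 0) + n div p ^ k)"
    by (simp add: sum.distrib sum.If_cases Int_def)
  also have "\<dots> = (\<Sum>k\<in>{1..K}. Suc n div p ^ k)"
    by (intro sum.cong refl) (simp add: div_Suc dvd_eq_mod_eq_0)
  finally show ?case .
qed

lemma ln_eq_sum_primes_multiplicity:
  assumes "(m::nat) > 0" "\<And>p. prime p \<Longrightarrow> p dvd m \<Longrightarrow> p \<le> M"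
  shows "ln (real m) = (\<Sum>p | prime p \<and> p \<le> M. ln (real p) * real (multiplicity p m))"
proof -
  have "real m = real (\<Prod>p\<in>prime_factors m. p ^ multiplicity p m)"
    using prod_prime_factors[of m] assms(1) by simp
  hence "ln (real m) = ln (\<Prod>p\<in>prime_factors m. real p ^ multiplicity p m)"
    by simp
  also have "\<dots> = (\<Sum>p\<in>prime_factors m. ln (real p) * real (multiplicity p m))"
    by (subst ln_prod) (auto simp: ln_realpow prime_gt_0_nat mult.commute dest: in_prime_factors_imp_prime)
  also have "\<dots> = (\<Sum>p | prime p \<and> p \<le> M. ln (real p) * real (multiplicity p m))"
    using assms by (intro sum.mono_neutral_left)
      (auto simp: in_prime_factors_iff not_dvd_imp_multiplicity_0)
  finally show ?thesis .
qed

lemma ln_fact_eq_sum_primes: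
  assumes "n \<le> M" "n \<le> K"
  shows "ln (fact n :: real) = (\<Sum>p | prime p \<and> p \<le> M. ln (real p) * (\<Sum>k\<in>{1..K}. real (n div p ^ k)))"
proof -
  have "ln (fact n :: real) = ln (real (fact n))" by simp
  also have "\<dots> = (\<Sum>p | prime p \<and> p \<le> M. ln (real p) * real (multiplicity p (fact n :: nat)))"
    using assms(1) by (intro ln_eq_sum_primes_multiplicity) (auto simp: prime_dvd_fact_iff)
  also have "\<dots> = (\<Sum>p | prime p \<and> p \<le> M. ln (real p) * (\<Sum>k\<in>{1..K}. real (n div p ^ k)))"
    using assms(2) by (intro sum.cong refl) (simp add: multiplicity_fact_eq_sum_div)
  finally show ?thesis .
qed

definition chebyshev_weight :: "nat \<Rightarrow> real" where
  "chebyshev_weight j = real j + real (j div 30) - real (j div 2) - real (j div 3) - real (j div 5)"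

lemma chebyshev_weight_mod: "chebyshev_weight j = chebyshev_weight (j mod 30)"
proof -
  obtain q r where j: "j = 30 * q + r" and r: "r < 30"
    using div_mod_decomp[of j 30] by (metis mod_less_divisor zero_less_numeral mult.commute)
  have "(30 * q + r) div 30 = q + r div 30" "(30 * q + r) div 2 = 15 * q + r div 2"
    "(30 * q + r) div 3 = 10 * q + r div 3" "(30 * q + r) div 5 = 6 * q + r div 5"
    by auto
  thus ?thesis unfolding chebyshev_weight_def j using r by simp
qed

lemma chebyshev_weight_bounds: "0 \<le> chebyshev_weight j" "chebyshev_weight j \<le> 1"
proof -
  have "\<forall>r\<in>{..<30}. 0 \<le> chebyshev_weight r \<and> chebyshev_weight r \<le> 1"
    by (simp add: chebyshev_weight_def lessThan_nat_numeral pred_numeral_simps)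
  thus "0 \<le> chebyshev_weight j" "chebyshev_weight j \<le> 1"
    by (subst chebyshev_weight_mod, simp)+
qed

lemma chebyshev_weight_0 [simp]: "chebyshev_weight 0 = 0"
  by (simp add: chebyshev_weight_def)

lemma chebyshev_weight_eq_1: "1 \<le> j \<Longrightarrow> j \<le> 5 \<Longrightarrow> chebyshev_weight j = 1"
  by (subgoal_tac "j \<in> {1, 2, 3, 4, 5}") (auto simp: chebyshev_weight_def)

definition chebyshev_ln_ratio :: "nat \<Rightarrow> real" where
  "chebyshev_ln_ratio m = ln (fact m) + ln (fact (m div 30))
     - ln (fact (m div 2)) - ln (fact (m div 3)) - ln (fact (m div 5))"

lemma chebyshev_ln_ratio_eq_sum_primes:
  "chebyshev_ln_ratio m =
     (\<Sum>p | prime p \<and> p \<le> m. ln (real p) * (\<Sum>k\<in>{1..m}. chebyshev_weight (m div p ^ k)))"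
proof -
  define S where "S = {p. prime p \<and> p \<le> m}"
  define W where "W d p = (\<Sum>k\<in>{1..m}. real ((m div p ^ k) div d))" for d p
  have "(m div d) div p ^ k = (m div p ^ k) div d" for d p k :: nat
    by (metis div_mult2_eq mult.commute)
  hence ln_fact_div: "ln (fact (m div d) :: real) = (\<Sum>p\<in>S. ln (real p) * W d p)" for d
    using ln_fact_eq_sum_primes[of "m div d" m m] unfolding S_def W_def by simp
  have "chebyshev_ln_ratio m = (\<Sum>p\<in>S. ln (real p) * W 1 p + ln (real p) * W 30 p
      - ln (real p) * W 2 p - ln (real p) * W 3 p - ln (real p) * W 5 p)"
    using ln_fact_div[of 1] unfolding chebyshev_ln_ratio_def ln_fact_div div_by_1
    by (simp only: sum_subtractf sum.distrib)
  also have "\<dots> = (\<Sum>p\<in>S. ln (real p) * (\<Sum>k\<in>{1..m}. chebyshev_weight (m div p ^ k)))"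
    unfolding W_def chebyshev_weight_def
    by (simp only: sum_subtractf sum.distrib div_by_1 flip: distrib_left right_diff_distrib)
  finally show ?thesis unfolding S_def .
qed

definition primes_theta :: "real \<Rightarrow> real" where
  "primes_theta x = (\<Sum>p | prime p \<and> real p \<le> x. ln (real p))"

lemma finite_primes_real_le: "finite {p::nat. prime p \<and> real p \<le> x}"
proof (rule finite_subset[of _ "{..nat \<lfloor>x\<rfloor>}"])
  show "{p. prime p \<and> real p \<le> x} \<subseteq> {..nat \<lfloor>x\<rfloor>}"
  proof
    fix p assume "p \<in> {p. prime p \<and> real p \<le> x}"
    hence "int p \<le> \<lfloor>x\<rfloor>" by (simp add: le_floor_iff)
    thus "p \<in> {..nat \<lfloor>x\<rfloor>}" by auto
  qed
qed auto

lemma finite_primes_between: "finite {p::nat. prime p \<and> y < real p \<and> real p \<le> x}"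
  by (rule finite_subset[OF _ finite_primes_real_le[of x]]) auto

lemma ln_prime_nonneg: "prime p \<Longrightarrow> 0 \<le> ln (real p)"
  using prime_ge_1_nat[of p] by simp

lemma sum_primes_between_split:
  assumes "y \<le> r" "r \<le> x"
  shows "(\<Sum>p | prime p \<and> y < real p \<and> real p \<le> x. f p) =
         (\<Sum>p | prime p \<and> y < real p \<and> real p \<le> r. f p) + (\<Sum>p | prime p \<and> r < real p \<and> real p \<le> x. f p)"
proof -
  have "{p. prime p \<and> y < real p \<and> real p \<le> x} =
        {p. prime p \<and> y < real p \<and> real p \<le> r} \<union> {p. prime p \<and> r < real p \<and> real p \<le> x}"
    using assms by auto
  thus ?thesis
    by (simp only:) (rule sum.union_disjoint[OF finite_primes_between finite_primes_between], auto)
qed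

lemma primes_theta_diff:
  assumes "y \<le> x"
  shows "primes_theta x - primes_theta y = (\<Sum>p | prime p \<and> y < real p \<and> real p \<le> x. ln (real p))"
proof -
  have "{p. prime p \<and> real p \<le> x} = {p. prime p \<and> real p \<le> y} \<union> {p. prime p \<and> y < real p \<and> real p \<le> x}"
    using assms by auto
  hence "primes_theta x = primes_theta y + (\<Sum>p | prime p \<and> y < real p \<and> real p \<le> x. ln (real p))"
    unfolding primes_theta_def
    by (simp only:) (rule sum.union_disjoint[OF finite_primes_real_le finite_primes_between], auto)
  thus ?thesis by simp
qed

lemma primes_theta_eq_0: "x < 2 \<Longrightarrow> primes_theta x = 0"
proof -
  assume x: "x < 2"
  have "{p. prime p \<and> real p \<le> x} = {}"
  proof safe
    fix p assume "prime p" "real p \<le> x"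
    with prime_ge_2_nat[of p] x show "p \<in> {}" by simp
  qed
  thus ?thesis unfolding primes_theta_def by (simp only: sum.empty)
qed

lemma primes_theta_cong: "(\<And>p::nat. real p \<le> x \<longleftrightarrow> real p \<le> y) \<Longrightarrow> primes_theta x = primes_theta y"
  unfolding primes_theta_def by (intro sum.cong) auto

lemma primes_theta_diff_le_chebyshev_ln_ratio:
  assumes "m \<ge> 1"
  shows "primes_theta (real m) - primes_theta (real m / 6) \<le> chebyshev_ln_ratio m"
proof -
  let ?G = "\<lambda>p. \<Sum>k\<in>{1..m}. chebyshev_weight (m div p ^ k)"
  have G_nonneg: "0 \<le> ?G p" for p
    by (intro sum_nonneg) (simp add: chebyshev_weight_bounds)
  have "primes_theta (real m) - primes_theta (real m / 6)
      = (\<Sum>p | prime p \<and> real m / 6 < real p \<and> real p \<le> real m. ln (real p))"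
    by (rule primes_theta_diff) simp
  also have "\<dots> \<le> (\<Sum>p | prime p \<and> real m / 6 < real p \<and> real p \<le> real m. ln (real p) * ?G p)"
  proof (rule sum_mono)
    fix p assume "p \<in> {p. prime p \<and> real m / 6 < real p \<and> real p \<le> real m}"
    hence p: "prime p" "m < 6 * p" "p \<le> m" by auto
    \<comment> \<open>the first term of \<open>?G p\<close> has weight 1 because \<open>1 \<le> m div p \<le> 5\<close>\<close>
    have "1 \<le> m div p" using p prime_gt_0_nat[of p] by (simp add: div_greater_zero_iff Suc_le_eq)
    moreover have "m div p \<le> 5" using less_mult_imp_div_less[of m 6 p] p by simp
    ultimately have "1 = chebyshev_weight (m div p ^ 1)" by (simp add: chebyshev_weight_eq_1)
    also have "\<dots> \<le> ?G p"
      using assms by (intro member_le_sum) (auto simp: chebyshev_weight_bounds)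
    finally show "ln (real p) \<le> ln (real p) * ?G p"
      using ln_prime_nonneg[OF p(1)] by (metis mult.right_neutral mult_left_mono)
  qed
  also have "\<dots> \<le> (\<Sum>p | prime p \<and> p \<le> m. ln (real p) * ?G p)"
    using G_nonneg ln_prime_nonneg by (intro sum_mono2) (auto intro!: mult_nonneg_nonneg)
  also have "\<dots> = chebyshev_ln_ratio m" by (rule chebyshev_ln_ratio_eq_sum_primes[symmetric])
  finally show ?thesis .
qed

lemma sum_chebyshev_weight_le_card:
  "(\<Sum>k\<in>{1..m}. chebyshev_weight (m div p ^ k)) \<le> real (card {k\<in>{1..m}. p ^ k \<le> m})"
proof -
  have "(\<Sum>k\<in>{1..m}. chebyshev_weight (m div p ^ k)) \<le> (\<Sum>k\<in>{1..m}. if p ^ k \<le> m then 1 else 0)"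
    using chebyshev_weight_bounds by (intro sum_mono) (auto simp: div_eq_0_iff)
  also have "\<dots> = real (card {k\<in>{1..m}. p ^ k \<le> m})"
    by (simp add: sum.If_cases Int_def)
  finally show ?thesis .
qed

lemma card_prime_powers_le_1:
  assumes "m < p * p"
  shows "card {k\<in>{1..m}. (p::nat) ^ k \<le> m} \<le> 1"
proof -
  have "{k\<in>{1..m}. p ^ k \<le> m} \<subseteq> {1}"
  proof
    fix k assume k: "k \<in> {k\<in>{1..m}. p ^ k \<le> m}"
    show "k \<in> {1}"
    proof (rule ccontr)
      assume "k \<notin> {1}"
      hence "2 \<le> k" using k by auto
      moreover have "p \<ge> 1" using assms by (cases p) auto
      ultimately have "p ^ 2 \<le> p ^ k" by (intro power_increasing)
      thus False using k assms by (simp add: power2_eq_square)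
    qed
  qed
  from card_mono[OF _ this] show ?thesis by simp
qed

lemma card_prime_powers_le_log:
  assumes "prime p" "m \<ge> 1"
  shows "real (card {k\<in>{1..m}. p ^ k \<le> m}) * ln (real p) \<le> ln (real m)"
proof -
  have lp: "ln (real p) > 0" using prime_gt_1_nat[OF assms(1)] by simp
  have "{k\<in>{1..m}. p ^ k \<le> m} \<subseteq> {1..nat \<lfloor>ln (real m) / ln (real p)\<rfloor>}"
  proof
    fix k assume k: "k \<in> {k\<in>{1..m}. p ^ k \<le> m}"
    hence "real p ^ k \<le> real m" by (metis mem_Collect_eq of_nat_le_iff of_nat_power)
    hence "ln (real p ^ k) \<le> ln (real m)"
      using assms prime_gt_0_nat[OF assms(1)] by (subst ln_le_cancel_iff) auto
    hence "real k * ln (real p) \<le> ln (real m)"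
      using prime_gt_0_nat[OF assms(1)] by (simp add: ln_realpow)
    hence "real k \<le> ln (real m) / ln (real p)" using lp by (simp add: pos_le_divide_eq)
    hence "k \<le> nat \<lfloor>ln (real m) / ln (real p)\<rfloor>" by linarith
    thus "k \<in> {1..nat \<lfloor>ln (real m) / ln (real p)\<rfloor>}" using k by auto
  qed
  hence "card {k\<in>{1..m}. p ^ k \<le> m} \<le> nat \<lfloor>ln (real m) / ln (real p)\<rfloor>"
    by (metis card_atLeastAtMost card_mono finite_atLeastAtMost diff_Suc_1)
  hence "real (card {k\<in>{1..m}. p ^ k \<le> m}) \<le> real (nat \<lfloor>ln (real m) / ln (real p)\<rfloor>)"
    by (simp only: of_nat_le_iff)
  also have "\<dots> \<le> ln (real m) / ln (real p)"
    using assms lp by (intro of_nat_floor) simp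
  finally have "real (card {k\<in>{1..m}. p ^ k \<le> m}) \<le> ln (real m) / ln (real p)" .
  thus ?thesis using lp by (simp add: pos_le_divide_eq)
qed

lemma card_primes_square_le: "real (card {p::nat. prime p \<and> p * p \<le> m}) \<le> sqrt (real m)"
proof -
  have "{p::nat. prime p \<and> p * p \<le> m} \<subseteq> {1..nat \<lfloor>sqrt (real m)\<rfloor>}"
  proof
    fix p assume p: "p \<in> {p::nat. prime p \<and> p * p \<le> m}"
    hence "real p * real p \<le> real m" by (metis mem_Collect_eq of_nat_le_iff of_nat_mult)
    hence "real p \<le> sqrt (real m)" by (metis of_nat_0_le_iff real_le_rsqrt power2_eq_square)
    hence "p \<le> nat \<lfloor>sqrt (real m)\<rfloor>" by (simp add: le_nat_floor)
    thus "p \<in> {1..nat \<lfloor>sqrt (real m)\<rfloor>}" using p prime_ge_1_nat by auto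
  qed
  hence "card {p::nat. prime p \<and> p * p \<le> m} \<le> nat \<lfloor>sqrt (real m)\<rfloor>"
    by (metis card_atLeastAtMost card_mono finite_atLeastAtMost diff_Suc_1)
  hence "real (card {p::nat. prime p \<and> p * p \<le> m}) \<le> real (nat \<lfloor>sqrt (real m)\<rfloor>)"
    by (simp only: of_nat_le_iff)
  also have "\<dots> \<le> sqrt (real m)" by (rule of_nat_floor) simp
  finally show ?thesis .
qed

lemma chebyshev_ln_ratio_le_primes_theta:
  assumes "m \<ge> 1"
  shows "chebyshev_ln_ratio m \<le> primes_theta (real m) + sqrt (real m) * ln (real m)"
proof -
  have "chebyshev_ln_ratio m
      = (\<Sum>p | prime p \<and> p \<le> m. ln (real p) * (\<Sum>k\<in>{1..m}. chebyshev_weight (m div p ^ k)))"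
    by (rule chebyshev_ln_ratio_eq_sum_primes)
  also have "\<dots> \<le> (\<Sum>p | prime p \<and> p \<le> m. ln (real p) + (if p * p \<le> m then ln (real m) else 0))"
  proof (rule sum_mono)
    fix p assume "p \<in> {p. prime p \<and> p \<le> m}"
    hence p: "prime p" by auto
    have lp: "0 \<le> ln (real p)" by (rule ln_prime_nonneg[OF p])
    have "ln (real p) * (\<Sum>k\<in>{1..m}. chebyshev_weight (m div p ^ k))
        \<le> ln (real p) * real (card {k\<in>{1..m}. p ^ k \<le> m})"
      by (rule mult_left_mono[OF sum_chebyshev_weight_le_card lp])
    also have "\<dots> \<le> ln (real p) + (if p * p \<le> m then ln (real m) else 0)"
    proof (cases "p * p \<le> m")
      case True
      thus ?thesis using card_prime_powers_le_log[OF p assms] lp by (simp add: mult.commute)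
    next
      case False
      hence "real (card {k\<in>{1..m}. p ^ k \<le> m}) \<le> 1" using card_prime_powers_le_1[of m p] by simp
      thus ?thesis using lp False by (simp add: mult_left_le)
    qed
    finally show "ln (real p) * (\<Sum>k\<in>{1..m}. chebyshev_weight (m div p ^ k))
        \<le> ln (real p) + (if p * p \<le> m then ln (real m) else 0)" .
  qed
  also have "\<dots> = primes_theta (real m) + real (card {p::nat. prime p \<and> p * p \<le> m}) * ln (real m)"
  proof -
    have "{p. prime p \<and> p \<le> m} \<inter> {p. p * p \<le> m} = {p::nat. prime p \<and> p * p \<le> m}"
      by (auto intro: order_trans[OF le_square])
    thus ?thesis unfolding primes_theta_def by (simp add: sum.distrib sum.If_cases)
  qed
  also have "\<dots> \<le> primes_theta (real m) + sqrt (real m) * ln (real m)"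
    using card_primes_square_le[of m] assms by (intro add_left_mono mult_right_mono) auto
  finally show ?thesis .
qed

definition ln_fact_approx :: "real \<Rightarrow> real" where
  "ln_fact_approx t = t * ln t - t"

lemma ln_fact_approx_0 [simp]: "ln_fact_approx 0 = 0"
  by (simp add: ln_fact_approx_def)

lemma ln_fact_approx_diff_le:
  assumes "0 < q" "q \<le> t"
  shows "ln_fact_approx t - ln_fact_approx q \<le> (t - q) * ln t"
proof -
  have "q * (ln t - ln q) \<le> t - q"
    using ln_diff_le[of t q] assms by (simp add: field_simps)
  thus ?thesis unfolding ln_fact_approx_def by (simp add: algebra_simps)
qed

lemma ln_fact_approx_diff_ge:
  assumes "0 < q" "q \<le> t"
  shows "(t - q) * ln q \<le> ln_fact_approx t - ln_fact_approx q"
proof -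
  have "t * (ln q - ln t) \<le> q - t"
    using ln_diff_le[of q t] assms by (simp add: field_simps)
  thus ?thesis unfolding ln_fact_approx_def by (simp add: algebra_simps)
qed

lemma ln_fact_approx_ge:
  assumes "t \<ge> 0"
  shows "ln_fact_approx t \<ge> -1"
proof (cases "t = 0")
  case False
  hence "- ln t \<le> (1 - t) / t" using ln_diff_le[of 1 t] assms by simp
  hence "t * (- ln t) \<le> 1 - t" using False assms by (simp add: pos_le_divide_eq mult.commute)
  thus ?thesis unfolding ln_fact_approx_def by simp
qed simp

lemma ln_fact_ge_approx: "ln_fact_approx (real n) \<le> ln (fact n)"
proof (induction n)
  case (Suc n)
  have "ln_fact_approx (real (Suc n)) - ln_fact_approx (real n) \<le> ln (real (Suc n))"
    using ln_fact_approx_diff_le[of "real n" "real (Suc n)"]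
    by (cases "n = 0") (auto simp: ln_fact_approx_def)
  moreover have "ln (fact (Suc n) :: real) = ln (real (Suc n)) + ln (fact n)"
    by (simp add: ln_mult)
  ultimately show ?case using Suc by linarith
qed simp

lemma ln_fact_le_approx: "ln (fact n) \<le> ln_fact_approx (real n) + ln (real n) + 1"
proof (induction n)
  case (Suc n)
  show ?case
  proof (cases "n = 0")
    case False
    have "ln_fact_approx (real n) + ln (real n) \<le> ln_fact_approx (real (Suc n))"
      using ln_fact_approx_diff_ge[of "real n" "real (Suc n)"] False by simp
    moreover have "ln (fact (Suc n) :: real) = ln (real (Suc n)) + ln (fact n)"
      by (simp add: ln_mult)
    ultimately show ?thesis using Suc by linarith
  qed (simp add: ln_fact_approx_def)
qed simp

lemma real_div_bounds:
  assumes "d \<ge> 1"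
  shows "real (m div d) \<le> real m / real d" "real m / real d < real (m div d) + 1"
proof -
  have "\<lfloor>real m / real d\<rfloor> = int (m div d)" by (simp add: floor_divide_of_nat_eq)
  thus "real (m div d) \<le> real m / real d" "real m / real d < real (m div d) + 1"
    by linarith+
qed

lemma ln_fact_approx_div_ge:
  assumes "m \<ge> 1" "d \<ge> 1"
  shows "ln_fact_approx (real m / real d) - ln (real m) \<le> ln_fact_approx (real (m div d))"
proof -
  define t where "t = real m / real d"
  note q = real_div_bounds[OF assms(2), of m, folded t_def]
  have t: "0 \<le> t" "t \<le> real m" unfolding t_def using assms by (auto simp: divide_le_eq)
  have "ln_fact_approx t - ln (real m) \<le> ln_fact_approx (real (m div d))"
  proof (cases "m div d = 0")
    case True
    hence "t * ln t \<le> 0" using q t by (cases "t = 0") (auto simp: mult_nonneg_nonpos)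
    moreover have "0 \<le> ln (real m)" using assms by simp
    ultimately show ?thesis using True t unfolding ln_fact_approx_def by simp
  next
    case False
    have "ln_fact_approx t - ln_fact_approx (real (m div d)) \<le> (t - real (m div d)) * ln t"
      using ln_fact_approx_diff_le[of "real (m div d)" t] False q by simp
    also have "\<dots> \<le> 1 * ln t" using q t False by (intro mult_right_mono) auto
    also have "\<dots> \<le> ln (real m)" using q t False by simp
    finally show ?thesis by simp
  qed
  thus ?thesis unfolding t_def .
qed

lemma ln_fact_approx_div_le:
  assumes "d \<ge> 1"
  shows "ln_fact_approx (real (m div d)) \<le> ln_fact_approx (real m / real d) + 1"
proof (cases "m div d = 0")
  case True
  thus ?thesis using ln_fact_approx_ge[of "real m / real d"] by simp
next
  case False
  note q = real_div_bounds[OF assms, of m]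
  have "0 \<le> (real m / real d - real (m div d)) * ln (real (m div d))"
    using q False by (intro mult_nonneg_nonneg) auto
  also have "\<dots> \<le> ln_fact_approx (real m / real d) - ln_fact_approx (real (m div d))"
    using ln_fact_approx_diff_ge[of "real (m div d)" "real m / real d"] q False by simp
  finally show ?thesis by linarith
qed

definition chebyshev_const :: real where
  "chebyshev_const = ln 2 / 2 + ln 3 / 3 + ln 5 / 5 - ln 30 / 30"

lemma ln_30: "ln (30::real) = ln 2 + ln 3 + ln 5"
proof -
  have "ln (30::real) = ln (2 * 3 * 5)" by simp
  also have "\<dots> = ln 2 + ln 3 + ln 5" by (simp only: ln_mult) simp_all
  finally show ?thesis .
qed

lemma chebyshev_const_nonneg: "chebyshev_const \<ge> 0"
proof -
  have "0 \<le> ln (2::real)" "0 \<le> ln (3::real)" "0 \<le> ln (5::real)" by simp_all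
  thus ?thesis using ln_30 unfolding chebyshev_const_def by linarith
qed

lemma chebyshev_const_le: "chebyshev_const \<le> 14/15"
proof -
  have "(2::real) ^ 14 * 3 ^ 9 * 5 ^ 5 \<le> (27/10) ^ 28" by (simp add: power_divide le_divide_eq)
  also have "(27/10::real) ^ 28 \<le> exp 1 ^ 28"
    using e_approx_32 by (intro power_mono) (auto simp: abs_if split: if_split_asm)
  also have "\<dots> = exp 28" by (simp flip: exp_of_nat_mult)
  finally have "ln ((2::real) ^ 14 * 3 ^ 9 * 5 ^ 5) \<le> 28"
    by (metis exp_gt_zero ln_exp ln_le_cancel_iff zero_less_numeral zero_less_power mult_pos_pos)
  moreover have "ln ((2::real) ^ 14 * 3 ^ 9 * 5 ^ 5) = 14 * ln 2 + 9 * ln 3 + 5 * ln 5"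
    by (simp only: ln_mult ln_realpow) simp
  ultimately show ?thesis unfolding chebyshev_const_def ln_30 by (simp add: field_simps)
qed

lemma ln_fact_approx_chebyshev:
  assumes "m \<ge> 1"
  shows "ln_fact_approx (real m) + ln_fact_approx (real m / 30) - ln_fact_approx (real m / 2)
           - ln_fact_approx (real m / 3) - ln_fact_approx (real m / 5) = chebyshev_const * real m"
  using assms unfolding ln_fact_approx_def chebyshev_const_def by (simp add: ln_div algebra_simps)

lemma chebyshev_ln_ratio_le:
  assumes "m \<ge> 1"
  shows "chebyshev_ln_ratio m \<le> chebyshev_const * real m + 5 * ln (real m) + 3"
proof -
  have ln_le: "ln (real (m div d)) \<le> ln (real m)" for d
    using assms by (cases "m div d = 0") auto
  have lower: "ln_fact_approx (real m / real d) - ln (real m) \<le> ln (fact (m div d))" if "d \<ge> 1" for d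
    using ln_fact_approx_div_ge[OF assms that] ln_fact_ge_approx order_trans by blast
  show ?thesis
    using ln_fact_le_approx[of m] ln_fact_le_approx[of "m div 30"] ln_le[of 30]
      ln_fact_approx_div_le[where d = 30 and m = m] lower[of 2] lower[of 3] lower[of 5]
      ln_fact_approx_chebyshev[OF assms]
    unfolding chebyshev_ln_ratio_def by simp
qed

lemma chebyshev_ln_ratio_ge:
  assumes "m \<ge> 1"
  shows "chebyshev_const * real m - 4 * ln (real m) - 6 \<le> chebyshev_ln_ratio m"
proof -
  have upper: "ln (fact (m div d)) \<le> ln_fact_approx (real m / real d) + ln (real m) + 2"
    if "d \<ge> 1" for d
  proof -
    have "ln (real (m div d)) \<le> ln (real m)"
      using assms by (cases "m div d = 0") auto
    thus ?thesis using ln_fact_le_approx[of "m div d"] ln_fact_approx_div_le[OF that, of m]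
      by linarith
  qed
  show ?thesis
    using ln_fact_ge_approx[of m] ln_fact_ge_approx[of "m div 30"]
      ln_fact_approx_div_ge[OF assms, of 30] upper[of 2] upper[of 3] upper[of 5]
      ln_fact_approx_chebyshev[OF assms]
    unfolding chebyshev_ln_ratio_def by simp
qed

lemma real_le_iff_le_nat_floor: "x \<ge> 0 \<Longrightarrow> real (p::nat) \<le> x \<longleftrightarrow> p \<le> nat \<lfloor>x\<rfloor>"
  by (meson le_nat_floor of_nat_floor of_nat_le_iff order_trans)

lemma primes_theta_diff_le:
  assumes "x \<ge> 1"
  shows "primes_theta x - primes_theta (x / 6) \<le> chebyshev_const * x + 5 * ln x + 3"
proof -
  define m where "m = nat \<lfloor>x\<rfloor>"
  have m: "m \<ge> 1" "real m \<le> x" "x < real m + 1" unfolding m_def using assms by linarith+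
  have "primes_theta x = primes_theta (real m)"
    by (rule primes_theta_cong) (use assms in \<open>simp add: m_def real_le_iff_le_nat_floor\<close>)
  moreover have "primes_theta (x / 6) = primes_theta (real m / 6)"
  proof (rule primes_theta_cong)
    fix p :: nat
    have "real p \<le> x / 6 \<longleftrightarrow> real (6 * p) \<le> x" by (simp add: mult.commute)
    also have "\<dots> \<longleftrightarrow> 6 * p \<le> m" unfolding m_def using assms by (intro real_le_iff_le_nat_floor) simp
    also have "\<dots> \<longleftrightarrow> real p \<le> real m / 6" by linarith
    finally show "real p \<le> x / 6 \<longleftrightarrow> real p \<le> real m / 6" .
  qed
  ultimately have "primes_theta x - primes_theta (x / 6) \<le> chebyshev_ln_ratio m"
    using primes_theta_diff_le_chebyshev_ln_ratio[OF m(1)] by simp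
  also have "\<dots> \<le> chebyshev_const * real m + 5 * ln (real m) + 3"
    by (rule chebyshev_ln_ratio_le[OF m(1)])
  also have "\<dots> \<le> chebyshev_const * x + 5 * ln x + 3"
    using m chebyshev_const_nonneg by (intro add_mono mult_left_mono) auto
  finally show ?thesis .
qed

lemma primes_theta_le_iterated:
  "1 \<le> x \<Longrightarrow> x < 6 ^ n \<Longrightarrow> primes_theta x \<le> 6/5 * chebyshev_const * x + real n * (5 * ln x + 3)"
proof (induction n arbitrary: x)
  case (Suc n)
  have step: "primes_theta x \<le> primes_theta (x / 6) + chebyshev_const * x + (5 * ln x + 3)"
    using primes_theta_diff_le[OF Suc.prems(1)] by simp
  have "0 \<le> ln x" using Suc.prems by simp
  show ?case
  proof (cases "x / 6 < 1")
    case True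
    have "chebyshev_const * x \<le> 6/5 * chebyshev_const * x"
      using chebyshev_const_nonneg Suc.prems by simp
    moreover have "5 * ln x + 3 \<le> real (Suc n) * (5 * ln x + 3)"
      using \<open>0 \<le> ln x\<close> by simp
    ultimately show ?thesis using step primes_theta_eq_0[of "x / 6"] True by linarith
  next
    case False
    hence "1 \<le> x / 6" "x / 6 < 6 ^ n" using Suc.prems by auto
    hence "primes_theta (x / 6) \<le> 6/5 * chebyshev_const * (x / 6) + real n * (5 * ln (x / 6) + 3)"
      by (rule Suc.IH)
    moreover have "real n * (5 * ln (x / 6) + 3) \<le> real n * (5 * ln x + 3)"
      using Suc.prems by (intro mult_left_mono) auto
    ultimately show ?thesis using step by (simp add: algebra_simps)
  qed
qed simp

lemma primes_theta_le:
  assumes "x \<ge> 1"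
  shows "primes_theta x \<le> 6/5 * chebyshev_const * x + (ln x / ln 6 + 2) * (5 * ln x + 3)"
proof -
  define n where "n = nat \<lceil>ln x / ln 6\<rceil> + 1"
  have "0 \<le> ln x" using assms by simp
  have "ln x / ln 6 < real n" unfolding n_def by linarith
  hence "ln x < real n * ln 6" by (simp add: divide_less_eq)
  hence "x < exp (real n * ln 6)" using assms by (metis exp_less_cancel_iff exp_ln less_le_trans zero_less_one)
  hence "x < 6 ^ n" by (simp add: exp_of_nat_mult)
  hence "primes_theta x \<le> 6/5 * chebyshev_const * x + real n * (5 * ln x + 3)"
    using primes_theta_le_iterated assms by blast
  moreover have "0 \<le> ln x / ln 6" using \<open>0 \<le> ln x\<close> by simp
  hence "real n \<le> ln x / ln 6 + 2" unfolding n_def by linarith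
  hence "real n * (5 * ln x + 3) \<le> (ln x / ln 6 + 2) * (5 * ln x + 3)"
    using \<open>0 \<le> ln x\<close> by (intro mult_right_mono) auto
  ultimately show ?thesis by linarith
qed

lemma primes_theta_ge:
  assumes "x \<ge> 1"
  shows "chebyshev_const * (x - 1) - 4 * ln x - 6 - sqrt x * ln x \<le> primes_theta x"
proof -
  define m where "m = nat \<lfloor>x\<rfloor>"
  have m: "m \<ge> 1" "real m \<le> x" "x < real m + 1" unfolding m_def using assms by linarith+
  have "primes_theta x = primes_theta (real m)"
    by (rule primes_theta_cong) (use assms in \<open>simp add: m_def real_le_iff_le_nat_floor\<close>)
  moreover have "chebyshev_const * real m - 4 * ln (real m) - 6
      \<le> primes_theta (real m) + sqrt (real m) * ln (real m)"
    using chebyshev_ln_ratio_ge[OF m(1)] chebyshev_ln_ratio_le_primes_theta[OF m(1)] by linarith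
  moreover have "chebyshev_const * (x - 1) \<le> chebyshev_const * real m"
    using m chebyshev_const_nonneg by (intro mult_left_mono) auto
  moreover have "ln (real m) \<le> ln x" using m by simp
  moreover have "sqrt (real m) * ln (real m) \<le> sqrt x * ln x"
    using m \<open>ln (real m) \<le> ln x\<close> by (intro mult_mono) auto
  ultimately show ?thesis by linarith
qed

lemma eventually_primes_theta_le:
  "eventually (\<lambda>x. primes_theta x \<le> (6/5 * chebyshev_const + 1/100) * x) at_top"
proof -
  have "eventually (\<lambda>x::real. (ln x / ln 6 + 2) * (5 * ln x + 3) \<le> 1/100 * x) at_top"
    by real_asymp
  with eventually_ge_at_top[of 1] show ?thesis
  proof eventually_elim
    case (elim x)
    have "(6/5 * chebyshev_const + 1/100) * x = 6/5 * chebyshev_const * x + 1/100 * x"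
      by (simp add: algebra_simps)
    thus ?case using elim primes_theta_le[of x] by linarith
  qed
qed

lemma eventually_primes_theta_ge:
  "eventually (\<lambda>x. (chebyshev_const - 1/100) * x \<le> primes_theta x) at_top"
proof -
  have "eventually (\<lambda>x::real. chebyshev_const + 4 * ln x + 6 + sqrt x * ln x \<le> 1/100 * x) at_top"
    by real_asymp
  with eventually_ge_at_top[of 1] show ?thesis
  proof eventually_elim
    case (elim x)
    have "(chebyshev_const - 1/100) * x = chebyshev_const * (x - 1) + chebyshev_const - 1/100 * x"
      by (simp add: algebra_simps)
    thus ?case using elim primes_theta_ge[of x] by linarith
  qed
qed

lemma sum_ln_prime_div_prime_le_primes_theta:
  assumes "0 < y" "y \<le> x"
  shows "(\<Sum>p | prime p \<and> y < real p \<and> real p \<le> x. ln (real p) / real p)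
           \<le> (primes_theta x - primes_theta y) / y"
proof -
  have "(\<Sum>p | prime p \<and> y < real p \<and> real p \<le> x. ln (real p) / real p)
      \<le> (\<Sum>p | prime p \<and> y < real p \<and> real p \<le> x. ln (real p) / y)"
    using assms ln_prime_nonneg by (intro sum_mono divide_left_mono) auto
  also have "\<dots> = (primes_theta x - primes_theta y) / y"
    by (simp add: primes_theta_diff[OF assms(2)] sum_divide_distrib)
  finally show ?thesis .
qed

lemma sum_ln_prime_div_prime_le_theta_bounds:
  assumes "0 < y"
    and upper: "primes_theta (5/3 * y) \<le> U * (5/3 * y)" "primes_theta (exp 1 * y) \<le> U * (exp 1 * y)"
    and lower: "L * y \<le> primes_theta y"
  shows "(\<Sum>p | prime p \<and> y < real p \<and> real p \<le> exp 1 * y. ln (real p) / real p)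
           \<le> (2/3 + 3/5 * exp 1) * U - L"
proof -
  have e: "5/3 \<le> exp (1::real)" using e_approx_32 by (simp add: abs_if split: if_split_asm)
  \<comment> \<open>splitting at \<open>5/3 * y\<close> balances the two upper bounds for \<open>\<theta>\<close> against the lower one\<close>
  have "(\<Sum>p | prime p \<and> y < real p \<and> real p \<le> exp 1 * y. ln (real p) / real p)
      = (\<Sum>p | prime p \<and> y < real p \<and> real p \<le> 5/3 * y. ln (real p) / real p)
        + (\<Sum>p | prime p \<and> 5/3 * y < real p \<and> real p \<le> exp 1 * y. ln (real p) / real p)"
    using assms e by (intro sum_primes_between_split) auto
  also have "\<dots> \<le> (primes_theta (5/3 * y) - primes_theta y) / y
                 + (primes_theta (exp 1 * y) - primes_theta (5/3 * y)) / (5/3 * y)"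
    using assms e by (intro add_mono sum_ln_prime_div_prime_le_primes_theta) auto
  also have "\<dots> = 2/5 * (primes_theta (5/3 * y) / y) + 3/5 * (primes_theta (exp 1 * y) / y)
                 - primes_theta y / y"
    using assms by (simp add: field_simps)
  also have "\<dots> \<le> 2/5 * (U * (5/3)) + 3/5 * (U * exp 1) - L"
    using assms by (intro diff_mono add_mono mult_left_mono) (auto simp: field_simps)
  also have "\<dots> = (2/3 + 3/5 * exp 1) * U - L" by (simp add: algebra_simps)
  finally show ?thesis .
qed

lemma eventually_sum_ln_prime_div_prime_le:
  "eventually (\<lambda>y. (\<Sum>p | prime p \<and> y < real p \<and> real p \<le> exp 1 * y. ln (real p) / real p) \<le> 17/10)
     at_top"
proof -
  define U where "U = 6/5 * chebyshev_const + 1/100"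
  define L where "L = chebyshev_const - 1/100"
  have lim: "filterlim (\<lambda>y::real. c * y) at_top at_top" if "c > 0" for c
    using that by real_asymp
  have bound: "(2/3 + 3/5 * exp 1) * U - L \<le> 17/10"
  proof -
    have "(2/3 + 3/5 * exp 1) * U \<le> (2/3 + 3/5 * (272/100)) * U"
      unfolding U_def using e_less_272 chebyshev_const_nonneg by (intro mult_right_mono) auto
    thus ?thesis unfolding U_def L_def using chebyshev_const_le by (simp add: algebra_simps)
  qed
  have "eventually (\<lambda>y. 0 < y \<and> primes_theta (5/3 * y) \<le> U * (5/3 * y)
          \<and> primes_theta (exp 1 * y) \<le> U * (exp 1 * y) \<and> L * y \<le> primes_theta y) at_top"
    unfolding U_def L_def
    by (intro eventually_conj eventually_gt_at_top eventually_primes_theta_ge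
        eventually_compose_filterlim[OF eventually_primes_theta_le] lim) simp_all
  thus ?thesis
    by eventually_elim (use sum_ln_prime_div_prime_le_theta_bounds bound in fastforce)
qed

lemma eventually_sum_inverse_primes_le:
  "eventually (\<lambda>y. \<forall>x\<ge>y. (\<Sum>p | prime p \<and> x < real p \<and> real p \<le> exp 1 * x. 1 / real p) \<le> 17/10 / ln x)
     at_top"
proof (rule eventually_all_ge_at_top)
  show "eventually (\<lambda>x. (\<Sum>p | prime p \<and> x < real p \<and> real p \<le> exp 1 * x. 1 / real p) \<le> 17/10 / ln x)
          at_top"
    using eventually_sum_ln_prime_div_prime_le eventually_gt_at_top[of 1]
  proof eventually_elim
    case (elim x)
    have "(\<Sum>p | prime p \<and> x < real p \<and> real p \<le> exp 1 * x. 1 / real p)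
        \<le> (\<Sum>p | prime p \<and> x < real p \<and> real p \<le> exp 1 * x. ln (real p) / real p / ln x)"
    proof (rule sum_mono)
      fix p assume "p \<in> {p. prime p \<and> x < real p \<and> real p \<le> exp 1 * x}"
      hence "x < real p" by simp
      hence "1 \<le> ln (real p) / ln x" using elim by simp
      thus "1 / real p \<le> ln (real p) / real p / ln x"
        using \<open>x < real p\<close> elim by (simp add: divide_right_mono field_simps)
    qed
    also have "\<dots> = (\<Sum>p | prime p \<and> x < real p \<and> real p \<le> exp 1 * x. ln (real p) / real p) / ln x"
      by (simp add: sum_divide_distrib)
    also have "\<dots> \<le> 17/10 / ln x"
      using elim by (intro divide_right_mono) auto
    finally show ?case .
  qed
qed

section \<open>Squarefree numbers as sets of primes\<close>

lemma prime_factors_prod_primes: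
  assumes "finite T" "\<And>p. p \<in> T \<Longrightarrow> prime (p::nat)"
  shows "prime_factors (\<Prod>T) = T"
proof -
  have "prime_factors (\<Prod>T) = \<Union>((prime_factors \<circ> (\<lambda>x. x)) ` T)"
    using assms by (intro prime_factors_prod) (auto dest: prime_gt_0_nat)
  also have "\<dots> = T" using assms by (auto simp: prime_prime_factors)
  finally show ?thesis .
qed

lemma squarefree_prod_primes:
  assumes "finite T" "\<And>p. p \<in> T \<Longrightarrow> prime (p::nat)"
  shows "squarefree (\<Prod>T)"
  using assms by (intro squarefree_prod_coprime) (auto intro: primes_coprime squarefree_prime)

lemma prod_primes_ge_1: "(\<And>p. p \<in> T \<Longrightarrow> prime (p::nat)) \<Longrightarrow> \<Prod>T \<ge> 1"
  by (metis One_nat_def Suc_leI prime_gt_0_nat prod_pos)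

lemma prod_prime_factors_squarefree:
  assumes "squarefree (n::nat)" "n \<ge> 1"
  shows "\<Prod>(prime_factors n) = n"
proof -
  have "(\<Prod>p\<in>prime_factors n. p) = (\<Prod>p\<in>prime_factors n. p ^ multiplicity p n)"
  proof (rule prod.cong[OF refl])
    fix p assume p: "p \<in> prime_factors n"
    have "multiplicity p n \<le> 1" "multiplicity p n \<ge> 1"
      using assms squarefree_factorial_semiring''[of n] p by (auto simp: prime_factors_multiplicity)
    hence "multiplicity p n = 1" by linarith
    thus "p = p ^ multiplicity p n" by simp
  qed
  also have "\<dots> = n" using prod_prime_factors[of n] assms by simp
  finally show ?thesis by simp
qed

lemma inj_on_prod_primes: "inj_on (\<lambda>T. \<Prod>T) {T. finite T \<and> (\<forall>p\<in>T. prime (p::nat))}"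
  by (rule inj_onI) (metis (no_types, lifting) mem_Collect_eq prime_factors_prod_primes)

lemma divisors_prod_primes:
  assumes "finite T" "\<And>p. p \<in> T \<Longrightarrow> prime (p::nat)"
  shows "{q. q dvd \<Prod>T} = (\<lambda>U. \<Prod>U) ` Pow T"
proof
  show "{q. q dvd \<Prod>T} \<subseteq> (\<lambda>U. \<Prod>U) ` Pow T"
  proof
    fix q assume "q \<in> {q. q dvd \<Prod>T}"
    hence q: "q dvd \<Prod>T" by simp
    have "\<Prod>T \<ge> 1" using assms by (intro prod_primes_ge_1)
    hence "q \<ge> 1" using q by (metis One_nat_def Suc_leI dvd_0_left_iff gr0I not_one_le_zero)
    have "prime_factors q \<subseteq> T"
      using q \<open>q \<ge> 1\<close> \<open>\<Prod>T \<ge> 1\<close> prime_factors_prod_primes[OF assms] by (metis dvd_prime_factors not_one_le_zero)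
    moreover have "\<Prod>(prime_factors q) = q"
      using q squarefree_prod_primes[OF assms] \<open>q \<ge> 1\<close>
      by (intro prod_prime_factors_squarefree) (auto intro: squarefree_mono)
    ultimately show "q \<in> (\<lambda>U. \<Prod>U) ` Pow T" by (intro image_eqI[of _ _ "prime_factors q"]) auto
  qed
  show "(\<lambda>U. \<Prod>U) ` Pow T \<subseteq> {q. q dvd \<Prod>T}"
    using assms by (auto intro: prod_dvd_prod_subset)
qed

lemma sum_divisors_prod_primes:
  assumes "finite T" "\<And>p. p \<in> T \<Longrightarrow> prime (p::nat)"
  shows "(\<Sum>q | q dvd \<Prod>T. g q) = (\<Sum>U\<in>Pow T. g (\<Prod>U))"
proof -
  have "inj_on (\<lambda>U. \<Prod>U) (Pow T)"
    by (rule inj_on_subset[OF inj_on_prod_primes]) (use assms in \<open>auto intro: finite_subset\<close>)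
  thus ?thesis by (simp add: divisors_prod_primes[OF assms] sum.reindex)
qed

lemma subset_PP_finite_primes:
  assumes "T \<subseteq> PP gam N"
  shows "finite T" "\<And>p. p \<in> T \<Longrightarrow> prime p"
proof -
  have "PP gam N \<subseteq> {..nat \<lceil>exp (ln (ln N) powr gam) * ln N * ln (ln N)\<rceil>}"
    unfolding PP_def by (auto simp: le_nat_iff le_ceiling_iff)
  thus "finite T" using assms by (meson finite_atMost finite_subset)
  show "\<And>p. p \<in> T \<Longrightarrow> prime p" using assms by (auto simp: PP_def)
qed

lemma finite_PP: "finite (PP gam N)"
  using subset_PP_finite_primes by blast

lemma suppf_eq_image: "suppf gam N = (\<lambda>T. \<Prod>T) ` Pow (PP gam N)"
proof
  show "suppf gam N \<subseteq> (\<lambda>T. \<Prod>T) ` Pow (PP gam N)"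
  proof
    fix n assume "n \<in> suppf gam N"
    hence "n \<ge> 1" "squarefree n" "prime_factors n \<subseteq> PP gam N" by (auto simp: suppf_def)
    thus "n \<in> (\<lambda>T. \<Prod>T) ` Pow (PP gam N)"
      by (intro image_eqI[of _ _ "prime_factors n"]) (auto simp: prod_prime_factors_squarefree)
  qed
  show "(\<lambda>T. \<Prod>T) ` Pow (PP gam N) \<subseteq> suppf gam N"
  proof
    fix n assume "n \<in> (\<lambda>T. \<Prod>T) ` Pow (PP gam N)"
    then obtain T where T: "T \<subseteq> PP gam N" "n = \<Prod>T" by auto
    note T' = subset_PP_finite_primes[OF T(1)]
    show "n \<in> suppf gam N"
      using T prod_primes_ge_1[OF T'(2)] squarefree_prod_primes[OF T'] prime_factors_prod_primes[OF T']
      unfolding suppf_def by simp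
  qed
qed

lemma inj_on_prod_Pow_PP: "inj_on (\<lambda>T. \<Prod>T) (Pow (PP gam N))"
  by (rule inj_on_subset[OF inj_on_prod_primes]) (use subset_PP_finite_primes in blast)

lemma sum_suppf_eq_sum_Pow:
  "(\<Sum>n | n \<in> suppf gam N \<and> P n. g n) = (\<Sum>T | T \<subseteq> PP gam N \<and> P (\<Prod>T). g (\<Prod>T))"
proof -
  have "{n. n \<in> suppf gam N \<and> P n} = (\<lambda>T. \<Prod>T) ` {T. T \<subseteq> PP gam N \<and> P (\<Prod>T)}"
    unfolding suppf_eq_image by blast
  moreover have "inj_on (\<lambda>T. \<Prod>T) {T. T \<subseteq> PP gam N \<and> P (\<Prod>T)}"
    by (rule inj_on_subset[OF inj_on_prod_Pow_PP]) blast
  ultimately show ?thesis by (simp add: sum.reindex)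
qed

lemma ff_prod:
  assumes "T \<subseteq> PP gam N"
  shows "ff AA gam N (\<Prod>T) = (\<Prod>p\<in>T. fp AA N p)"
  using assms suppf_eq_image[of gam N] subset_PP_finite_primes[OF assms]
  by (auto simp: ff_def prime_factors_prod_primes)

lemma hh_prod:
  assumes "T \<subseteq> PP gam N"
  shows "hh (\<Prod>T) = (\<Prod>p\<in>T. real p / (real p + 1))"
  using subset_PP_finite_primes[OF assms] by (simp add: hh_def prime_factors_prod_primes)

definition term_prime :: "real \<Rightarrow> real \<Rightarrow> nat \<Rightarrow> real" where
  "term_prime AA N p = fp AA N p * (real p / (real p + 1)) / real p powr sig AA N
     * (1 + fp AA N p * real p powr sig AA N)"

lemma term_n_prod:
  assumes "T \<subseteq> PP gam N"
  shows "term_n AA gam N (\<Prod>T) = (\<Prod>p\<in>T. term_prime AA N p)"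
proof -
  note T = subset_PP_finite_primes[OF assms]
  define s where "s = sig AA N"
  have "(\<Sum>q | q dvd \<Prod>T. ff AA gam N q * real q powr s)
      = (\<Sum>U\<in>Pow T. ff AA gam N (\<Prod>U) * real (\<Prod>U) powr s)"
    by (rule sum_divisors_prod_primes[OF T])
  also have "\<dots> = (\<Sum>U\<in>Pow T. \<Prod>p\<in>U. fp AA N p * real p powr s)"
    using assms by (intro sum.cong refl) (auto simp: ff_prod prod_powr_distrib prod.distrib)
  also have "\<dots> = (\<Prod>p\<in>T. fp AA N p * real p powr s + 1)"
    by (subst prod_add[OF T(1)]) simp
  finally have "(\<Sum>q | q dvd \<Prod>T. ff AA gam N q * real q powr s)
      = (\<Prod>p\<in>T. fp AA N p * real p powr s + 1)" .
  thus ?thesis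
    unfolding term_n_def term_prime_def s_def[symmetric] ff_prod[OF assms] hh_prod[OF assms]
    by (simp add: prod_powr_distrib prod.distrib prod_dividef add.commute)
qed

lemma infsum_term_n_eq_sum:
  "(\<Sum>\<^sub>\<infinity>n\<in>{n. n \<ge> 1 \<and> P n}. term_n AA gam N n) = (\<Sum>n | n \<in> suppf gam N \<and> P n. term_n AA gam N n)"
proof -
  have "(\<Sum>\<^sub>\<infinity>n\<in>{n. n \<ge> 1 \<and> P n}. term_n AA gam N n) = (\<Sum>\<^sub>\<infinity>n | n \<in> suppf gam N \<and> P n. term_n AA gam N n)"
    by (rule infsum_cong_neutral) (auto simp: term_n_def ff_def suppf_def)
  also have "\<dots> = (\<Sum>n | n \<in> suppf gam N \<and> P n. term_n AA gam N n)"
    using finite_PP[of gam N] by (intro infsum_finite) (simp add: suppf_eq_image)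
  finally show ?thesis .
qed

lemma infsum_term_n_eq_prod:
  "(\<Sum>\<^sub>\<infinity>n\<in>{n. n \<ge> 1}. term_n AA gam N n) = (\<Prod>p\<in>PP gam N. 1 + term_prime AA N p)"
proof -
  have "(\<Sum>\<^sub>\<infinity>n\<in>{n. n \<ge> 1}. term_n AA gam N n) = (\<Sum>n | n \<in> suppf gam N \<and> True. term_n AA gam N n)"
    using infsum_term_n_eq_sum[where P = "\<lambda>_. True"] by simp
  also have "\<dots> = (\<Sum>T | T \<subseteq> PP gam N \<and> True. term_n AA gam N (\<Prod>T))"
    by (rule sum_suppf_eq_sum_Pow)
  also have "\<dots> = (\<Sum>T\<in>Pow (PP gam N). \<Prod>p\<in>T. term_prime AA N p)"
    by (intro sum.cong) (auto simp: term_n_prod)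
  also have "\<dots> = (\<Prod>p\<in>PP gam N. term_prime AA N p + 1)"
    by (subst prod_add[OF finite_PP]) simp
  finally show ?thesis by (simp add: add.commute)
qed

lemma infsum_term_n_not_MM:
  "(\<Sum>\<^sub>\<infinity>n\<in>{n. n \<ge> 1 \<and> n \<notin> MM AA gam a N}. term_n AA gam N n)
     = (\<Sum>T | T \<subseteq> PP gam N \<and> (\<exists>k\<in>{1..nat \<lfloor>ln (ln N) powr gam\<rfloor>}. Delta AA a N k \<le> real (card (T \<inter> Pk N k))).
          \<Prod>p\<in>T. term_prime AA N p)"
proof -
  have "\<Prod>T \<notin> MM AA gam a N \<longleftrightarrow>
      (\<exists>k\<in>{1..nat \<lfloor>ln (ln N) powr gam\<rfloor>}. Delta AA a N k \<le> real (card (T \<inter> Pk N k)))"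
    if "T \<subseteq> PP gam N" for T
    using that suppf_eq_image[of gam N] prime_factors_prod_primes[OF subset_PP_finite_primes[OF that]]
    by (auto simp: MM_def Mk_def)
  thus ?thesis
    unfolding infsum_term_n_eq_sum sum_suppf_eq_sum_Pow
    by (intro sum.cong) (auto simp: term_n_prod)
qed

section \<open>Rankin's trick\<close>

lemma sum_ex_le_sum_sum:
  fixes f :: "'a \<Rightarrow> real"
  assumes "finite A" "finite K" "\<And>x. x \<in> A \<Longrightarrow> 0 \<le> f x"
  shows "(\<Sum>x | x \<in> A \<and> (\<exists>k\<in>K. P k x). f x) \<le> (\<Sum>k\<in>K. \<Sum>x | x \<in> A \<and> P k x. f x)"
proof -
  have "(\<Sum>x | x \<in> A \<and> (\<exists>k\<in>K. P k x). f x)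
      \<le> (\<Sum>x | x \<in> A \<and> (\<exists>k\<in>K. P k x). \<Sum>k\<in>K. if P k x then f x else 0)"
  proof (rule sum_mono)
    fix x assume x: "x \<in> {x. x \<in> A \<and> (\<exists>k\<in>K. P k x)}"
    then obtain k where k: "k \<in> K" "P k x" by auto
    have "f x = (if P k x then f x else 0)" using k by simp
    also have "\<dots> \<le> (\<Sum>k\<in>K. if P k x then f x else 0)"
      using k assms x by (intro member_le_sum) auto
    finally show "f x \<le> (\<Sum>k\<in>K. if P k x then f x else 0)" .
  qed
  also have "\<dots> \<le> (\<Sum>x\<in>A. \<Sum>k\<in>K. if P k x then f x else 0)"
    using assms by (intro sum_mono2) (auto intro!: sum_nonneg)
  also have "\<dots> = (\<Sum>k\<in>K. \<Sum>x | x \<in> A \<and> P k x. f x)"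
    using assms by (subst sum.swap) (simp add: sum.inter_filter)
  finally show ?thesis .
qed

lemma one_plus_mult_le_exp:
  fixes t w :: real
  assumes "t \<ge> 0" "w \<ge> 1"
  shows "1 + t * w \<le> (1 + t) * exp ((w - 1) * t)"
proof -
  have "(1 + t) * (1 + (w - 1) * t) = 1 + t * w + (w - 1) * t * t" by (simp add: algebra_simps)
  moreover have "(w - 1) * t * t \<ge> 0" using assms by simp
  ultimately have "1 + t * w \<le> (1 + t) * (1 + (w - 1) * t)" by linarith
  also have "\<dots> \<le> (1 + t) * exp ((w - 1) * t)"
    using assms by (intro mult_left_mono) (auto simp: exp_ge_add_one_self_aux add.commute)
  finally show ?thesis .
qed

lemma prod_one_plus_mult_le:
  fixes t w :: "'a \<Rightarrow> real"
  assumes "finite S" "\<And>p. p \<in> S \<Longrightarrow> 0 \<le> t p" "\<And>p. 1 \<le> w p"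
  shows "(\<Prod>p\<in>S. t p * w p + 1) \<le> (\<Prod>p\<in>S. 1 + t p) * exp (\<Sum>p\<in>S. (w p - 1) * t p)"
proof -
  have "(\<Prod>p\<in>S. t p * w p + 1) \<le> (\<Prod>p\<in>S. (1 + t p) * exp ((w p - 1) * t p))"
  proof (rule prod_mono)
    fix p assume "p \<in> S"
    hence "0 \<le> t p * w p" using assms(2,3)[of p] by simp
    thus "0 \<le> t p * w p + 1 \<and> t p * w p + 1 \<le> (1 + t p) * exp ((w p - 1) * t p)"
      using one_plus_mult_le_exp[OF assms(2)[OF \<open>p \<in> S\<close>] assms(3)[of p]] by (simp add: add.commute)
  qed
  thus ?thesis using assms(1) by (simp add: prod.distrib exp_sum)
qed

text \<open>Rankin's trick: weighting each \<open>T\<close> by \<open>exp (\<lambda> (card (T \<inter> Q) - D)) \<ge> 1\<close> turns the restricted sum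
  into a full Euler product.\<close>

lemma sum_subsets_card_inter_ge_le:
  fixes t :: "'a \<Rightarrow> real"
  assumes S: "finite S" and t: "\<And>p. p \<in> S \<Longrightarrow> t p \<ge> 0" and lam: "lam \<ge> 0"
  shows "(\<Sum>T | T \<subseteq> S \<and> D \<le> real (card (T \<inter> Q)). \<Prod>p\<in>T. t p)
         \<le> exp (- lam * D + (exp lam - 1) * (\<Sum>p\<in>S \<inter> Q. t p)) * (\<Prod>p\<in>S. 1 + t p)"
proof -
  define w where "w p = (if p \<in> Q then exp lam else 1)" for p
  have w1: "w p \<ge> 1" for p using lam by (simp add: w_def)
  have prod_w: "(\<Prod>p\<in>T. w p) = exp (lam * real (card (T \<inter> Q)))" if "T \<subseteq> S" for T
  proof -
    have "finite T" using that S finite_subset by blast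
    hence "(\<Prod>p\<in>T. w p) = exp lam ^ card (T \<inter> Q)"
      unfolding w_def by (simp add: prod.If_cases Int_def)
    thus ?thesis by (simp add: exp_of_nat_mult[symmetric] mult.commute)
  qed
  have prod_t_nonneg: "(\<Prod>p\<in>T. t p) \<ge> 0" if "T \<subseteq> S" for T using that t by (intro prod_nonneg) auto
  have "(\<Sum>T | T \<subseteq> S \<and> D \<le> real (card (T \<inter> Q)). \<Prod>p\<in>T. t p)
      \<le> (\<Sum>T | T \<subseteq> S \<and> D \<le> real (card (T \<inter> Q)). (\<Prod>p\<in>T. t p) * exp (lam * (real (card (T \<inter> Q)) - D)))"
  proof (rule sum_mono)
    fix T assume T: "T \<in> {T. T \<subseteq> S \<and> D \<le> real (card (T \<inter> Q))}"
    hence "1 \<le> exp (lam * (real (card (T \<inter> Q)) - D))" using lam by simp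
    thus "(\<Prod>p\<in>T. t p) \<le> (\<Prod>p\<in>T. t p) * exp (lam * (real (card (T \<inter> Q)) - D))"
      using prod_t_nonneg[of T] T by (simp add: mult_le_cancel_left1)
  qed
  also have "\<dots> \<le> (\<Sum>T\<in>Pow S. (\<Prod>p\<in>T. t p) * exp (lam * (real (card (T \<inter> Q)) - D)))"
    using S prod_t_nonneg by (intro sum_mono2) auto
  also have "\<dots> = exp (- lam * D) * (\<Sum>T\<in>Pow S. \<Prod>p\<in>T. t p * w p)"
    unfolding sum_distrib_left
    by (intro sum.cong refl) (simp add: prod_w prod.distrib right_diff_distrib exp_diff exp_minus field_simps)
  also have "(\<Sum>T\<in>Pow S. \<Prod>p\<in>T. t p * w p) = (\<Prod>p\<in>S. t p * w p + 1)"
    by (subst prod_add[OF S]) simp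
  also have "\<dots> \<le> (\<Prod>p\<in>S. 1 + t p) * exp (\<Sum>p\<in>S. (w p - 1) * t p)"
    using S t w1 by (rule prod_one_plus_mult_le)
  also have "(\<Sum>p\<in>S. (w p - 1) * t p) = (\<Sum>p\<in>S. if p \<in> Q then (exp lam - 1) * t p else 0)"
    by (intro sum.cong refl) (simp add: w_def)
  also have "\<dots> = (exp lam - 1) * (\<Sum>p\<in>S \<inter> Q. t p)"
    using S by (simp add: sum.If_cases Int_def sum_distrib_left)
  finally have "(\<Sum>T | T \<subseteq> S \<and> D \<le> real (card (T \<inter> Q)). \<Prod>p\<in>T. t p)
      \<le> exp (- lam * D) * ((\<Prod>p\<in>S. 1 + t p) * exp ((exp lam - 1) * (\<Sum>p\<in>S \<inter> Q. t p)))"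
    by (simp add: mult_left_mono)
  thus ?thesis by (simp only: exp_add mult_ac)
qed

lemma ln_less_minus_one: "0 < x \<Longrightarrow> x \<noteq> 1 \<Longrightarrow> ln x < x - (1::real)"
  using ln_le_minus_one[of x] ln_eq_minus_one[of x] by fastforce

corollary sum_subsets_card_inter_ge_le_exp:
  fixes t :: "'a \<Rightarrow> real"
  assumes S: "finite S" and t: "\<And>p. p \<in> S \<Longrightarrow> t p \<ge> 0" and \<rho>: "0 < \<rho>" "\<rho> \<le> 1"
    and mean: "(\<Sum>p\<in>S \<inter> Q. t p) \<le> \<rho> * D"
  shows "(\<Sum>T | T \<subseteq> S \<and> D \<le> real (card (T \<inter> Q)). \<Prod>p\<in>T. t p)
         \<le> exp (- (\<rho> - 1 - ln \<rho>) * D) * (\<Prod>p\<in>S. 1 + t p)"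
proof -
  have "exp (- ln \<rho>) - 1 = 1 / \<rho> - 1" using \<rho> by (simp add: exp_minus inverse_eq_divide)
  moreover have "0 \<le> 1 / \<rho> - 1" using \<rho> by simp
  ultimately have "(exp (- ln \<rho>) - 1) * (\<Sum>p\<in>S \<inter> Q. t p) \<le> (1 / \<rho> - 1) * (\<rho> * D)"
    using mean by (simp add: mult_left_mono)
  also have "\<dots> = (1 - \<rho>) * D" using \<rho> by (simp add: field_simps)
  finally have "- (- ln \<rho>) * D + (exp (- ln \<rho>) - 1) * (\<Sum>p\<in>S \<inter> Q. t p) \<le> - (\<rho> - 1 - ln \<rho>) * D"
    by (simp add: algebra_simps)
  moreover have "0 \<le> (\<Prod>p\<in>S. 1 + t p)" using t by (intro prod_nonneg) (auto intro: add_nonneg_nonneg)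
  ultimately have "exp (- (- ln \<rho>) * D + (exp (- ln \<rho>) - 1) * (\<Sum>p\<in>S \<inter> Q. t p)) * (\<Prod>p\<in>S. 1 + t p)
      \<le> exp (- (\<rho> - 1 - ln \<rho>) * D) * (\<Prod>p\<in>S. 1 + t p)"
    by (intro mult_right_mono) auto
  moreover have "(\<Sum>T | T \<subseteq> S \<and> D \<le> real (card (T \<inter> Q)). \<Prod>p\<in>T. t p)
      \<le> exp (- (- ln \<rho>) * D + (exp (- ln \<rho>) - 1) * (\<Sum>p\<in>S \<inter> Q. t p)) * (\<Prod>p\<in>S. 1 + t p)"
    using S t \<rho> by (intro sum_subsets_card_inter_ge_le) auto
  ultimately show ?thesis by linarith
qed

section \<open>Estimates on the blocks \<open>Pk\<close>\<close>

definition fp_scale :: "real \<Rightarrow> real \<Rightarrow> real" where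
  "fp_scale AA N = ln N powr (1 - sig AA N) * ln (ln N) powr sig AA N / ln (ln (ln N)) powr (1 - sig AA N)"

definition delta_scale :: "real \<Rightarrow> real \<Rightarrow> real" where
  "delta_scale AA N = ln N powr (2 - 2 * sig AA N) / ln (ln (ln N)) powr (2 - 2 * sig AA N)"

lemma Delta_eq: "Delta AA a N k = a * delta_scale AA N / (real k)\<^sup>2"
  by (simp add: Delta_def delta_scale_def)

lemma fp_scale_nonneg: "fp_scale AA N \<ge> 0"
  by (simp add: fp_scale_def)

lemma delta_scale_nonneg: "delta_scale AA N \<ge> 0"
  by (simp add: delta_scale_def)

lemma mult_exp_le_powr_sig_sq:
  assumes "AA \<ge> 0" "0 < ln (ln N)" "ln (ln N) \<le> ln x" "0 < x"
  shows "x * exp (2 * AA) \<le> x powr sig AA N * x powr sig AA N"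
proof -
  have "2 * AA \<le> 2 * AA / ln (ln N) * ln x"
    using assms by (simp add: field_simps mult_left_mono)
  hence "exp (2 * AA) \<le> x powr (2 * AA / ln (ln N))" using assms(4) by (simp add: powr_def)
  also have "x * \<dots> = x powr sig AA N * x powr sig AA N"
    using assms(4) unfolding sig_def by (simp flip: powr_add) (simp add: powr_add)
  finally show ?thesis using assms(4) by simp
qed

lemma term_prime_eq:
  fixes AA N :: real and p :: nat
  assumes "0 < p"
  defines "u \<equiv> fp_scale AA N / (ln (real p) - ln (ln N) - ln (ln (ln N)))"
  shows "term_prime AA N p = real p / (real p + 1) * (u + u\<^sup>2) / (real p powr sig AA N)\<^sup>2"
proof -
  have fp: "fp AA N p = u / real p powr sig AA N"
    unfolding fp_def u_def fp_scale_def by (simp add: mult_ac)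
  show ?thesis unfolding term_prime_def fp using assms(1) by (simp add: field_simps power2_eq_square)
qed

lemma term_prime_bounds:
  assumes "AA > 0" "exp 1 \<le> ln N" "1 \<le> real k" "exp (real k) * ln N * ln (ln N) < real p"
  shows "0 \<le> term_prime AA N p"
    and "term_prime AA N p \<le> exp (-2 * AA) * ((fp_scale AA N / real k)\<^sup>2 + fp_scale AA N / real k) / real p"
proof -
  define C where "C = fp_scale AA N"
  define u where "u = C / (ln (real p) - ln (ln N) - ln (ln (ln N)))"
  define X where "X = real p / (real p + 1) * (u + u\<^sup>2)"
  have "1 < ln N" by (rule less_le_trans[OF _ assms(2)]) simp
  moreover have "1 \<le> ln (ln N)" using assms(2) \<open>1 < ln N\<close> by (simp add: ln_ge_iff)
  ultimately have L: "0 < ln N" "0 < ln (ln N)" "0 \<le> ln (ln (ln N))" by auto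
  have "0 < exp (real k) * ln N * ln (ln N)" using L by simp
  hence p: "0 < real p" using assms(4) by linarith
  have "ln (exp (real k) * ln N * ln (ln N)) < ln (real p)"
    using assms(4) L p by (subst ln_less_cancel_iff) auto
  hence kD: "real k < ln (real p) - ln (ln N) - ln (ln (ln N))" using L by (simp add: ln_mult_pos)
  have u: "0 \<le> u" "u \<le> C / real k"
    unfolding u_def C_def using fp_scale_nonneg kD assms(3) by (auto intro: divide_left_mono)
  have X: "0 \<le> X" "X \<le> (C / real k)\<^sup>2 + C / real k"
  proof -
    show "0 \<le> X" unfolding X_def using u by simp
    have "X \<le> u + u\<^sup>2" unfolding X_def using u by (intro mult_left_le_one_le) auto
    also have "\<dots> \<le> C / real k + (C / real k)\<^sup>2" using u by (intro add_mono power_mono) auto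
    finally show "X \<le> (C / real k)\<^sup>2 + C / real k" by simp
  qed
  have tp: "term_prime AA N p = X / (real p powr sig AA N)\<^sup>2"
    unfolding X_def u_def C_def using p by (simp add: term_prime_eq)
  show "0 \<le> term_prime AA N p" unfolding tp using X(1) by simp
  have "ln (ln N) \<le> ln (real p)" using kD assms(3) L by linarith
  hence "real p * exp (2 * AA) \<le> (real p powr sig AA N)\<^sup>2"
    unfolding power2_eq_square using assms(1) L(2) p by (intro mult_exp_le_powr_sig_sq) auto
  hence "term_prime AA N p \<le> ((C / real k)\<^sup>2 + C / real k) / (real p * exp (2 * AA))"
    unfolding tp using X p by (intro frac_le) auto
  thus "term_prime AA N p \<le> exp (-2 * AA) * ((fp_scale AA N / real k)\<^sup>2 + fp_scale AA N / real k) / real p"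
    unfolding C_def by (simp add: exp_minus field_simps)
qed

lemma Pk_eq: "Pk N k = {p. prime p \<and> exp (real k) * ln N * ln (ln N) < real p
                           \<and> real p \<le> exp 1 * (exp (real k) * ln N * ln (ln N))}"
  unfolding Pk_def by (simp add: exp_add mult_ac)

lemma sum_term_prime_Pk_le:
  assumes "AA > 0" "exp 1 \<le> ln N" "1 \<le> real k"
    and mertens: "\<forall>x\<ge>ln N * ln (ln N).
          (\<Sum>p | prime p \<and> x < real p \<and> real p \<le> exp 1 * x. 1 / real p) \<le> 17/10 / ln x"
  shows "(\<Sum>p\<in>PP gam N \<inter> Pk N k. term_prime AA N p)
           \<le> 17/10 * exp (-2 * AA) * ((fp_scale AA N / real k)\<^sup>2 + fp_scale AA N / real k) / ln (ln N)"
proof -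
  define B where "B = exp (-2 * AA) * ((fp_scale AA N / real k)\<^sup>2 + fp_scale AA N / real k)"
  define x where "x = exp (real k) * ln N * ln (ln N)"
  have "1 < ln N" by (rule less_le_trans[OF _ assms(2)]) simp
  hence "1 \<le> ln (ln N)" using assms(2) by (simp add: ln_ge_iff)
  have B: "0 \<le> B" unfolding B_def using fp_scale_nonneg assms(3) by simp
  have tp: "0 \<le> term_prime AA N p \<and> term_prime AA N p \<le> B / real p" if "p \<in> Pk N k" for p
    using that term_prime_bounds[OF assms(1-3)] unfolding B_def Pk_def by auto
  have "(\<Sum>p\<in>PP gam N \<inter> Pk N k. term_prime AA N p) \<le> (\<Sum>p\<in>Pk N k. term_prime AA N p)"
    using tp by (intro sum_mono2) (auto simp: Pk_eq finite_primes_between)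
  also have "\<dots> \<le> (\<Sum>p\<in>Pk N k. B * (1 / real p))"
    using tp by (intro sum_mono) auto
  also have "\<dots> = B * (\<Sum>p | prime p \<and> x < real p \<and> real p \<le> exp 1 * x. 1 / real p)"
    unfolding Pk_eq x_def by (simp add: sum_distrib_left)
  also have "\<dots> \<le> B * (17/10 / ln x)"
  proof -
    have "ln N * ln (ln N) \<le> x" unfolding x_def using \<open>1 < ln N\<close> \<open>1 \<le> ln (ln N)\<close> by simp
    thus ?thesis using mertens B by (intro mult_left_mono) auto
  qed
  also have "\<dots> \<le> B * (17/10 / ln (ln N))"
  proof -
    have "ln x = real k + ln (ln N) + ln (ln (ln N))"
      unfolding x_def using \<open>1 < ln N\<close> \<open>1 \<le> ln (ln N)\<close> by (simp add: ln_mult_pos)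
    hence "ln (ln N) \<le> ln x" using assms(3) \<open>1 \<le> ln (ln N)\<close> by simp
    thus ?thesis using B \<open>1 \<le> ln (ln N)\<close> by (intro mult_left_mono divide_left_mono) auto
  qed
  finally show ?thesis unfolding B_def by simp
qed

lemma iterated_ln_bounds:
  fixes N :: real
  assumes "exp (exp 1) \<le> ln N"
  shows "1 < ln N" "1 < ln (ln N)" "1 \<le> ln (ln (ln N))"
proof -
  show "1 < ln N" by (rule less_le_trans[OF _ assms]) simp
  hence "exp 1 \<le> ln (ln N)" using assms by (simp add: ln_ge_iff)
  thus "1 < ln (ln N)" by (rule less_le_trans[rotated]) simp
  with \<open>exp 1 \<le> ln (ln N)\<close> show "1 \<le> ln (ln (ln N))" by (simp add: ln_ge_iff)
qed

lemma sig_bounds: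
  assumes "AA \<ge> 0" "0 < ln (ln N)" "AA / ln (ln N) \<le> 1/2"
  shows "1/2 \<le> sig AA N" "sig AA N \<le> 1"
proof -
  show "1/2 \<le> sig AA N" using assms by (simp add: sig_def)
  show "sig AA N \<le> 1" unfolding sig_def using assms(3) by linarith
qed

lemma ln_powr_two_minus_two_sig:
  assumes "1 < ln N"
  shows "ln N powr (2 - 2 * sig AA N) = exp (-2 * AA) * ln N"
proof -
  have "ln N powr (2 - 2 * sig AA N) = exp ((2 - 2 * sig AA N) * ln (ln N))"
    using assms by (simp add: powr_def)
  also have "(2 - 2 * sig AA N) * ln (ln N) = ln (ln N) - 2 * AA"
    using assms unfolding sig_def by (simp add: field_simps)
  also have "exp (ln (ln N) - 2 * AA) = exp (-2 * AA) * ln N"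
    using assms by (simp add: exp_diff exp_minus field_simps)
  finally show ?thesis .
qed

lemma delta_scale_ge:
  assumes "AA \<ge> 0" "exp (exp 1) \<le> ln N" "AA / ln (ln N) \<le> 1/2"
  shows "exp (-2 * AA) * ln N / ln (ln (ln N)) \<le> delta_scale AA N"
proof -
  note N = iterated_ln_bounds[OF assms(2)]
  have "ln (ln (ln N)) powr (2 - 2 * sig AA N) \<le> ln (ln (ln N)) powr 1"
    using N sig_bounds[OF assms(1) _ assms(3)] by (intro powr_mono) auto
  thus ?thesis
    unfolding delta_scale_def ln_powr_two_minus_two_sig[OF N(1)]
    using N by (intro divide_left_mono) (auto intro!: mult_pos_pos)
qed

lemma fp_scale_sq:
  assumes "exp (exp 1) \<le> ln N"
  shows "(fp_scale AA N)\<^sup>2 = delta_scale AA N * ln (ln N) * exp (2 * AA * ln (ln (ln N)) / ln (ln N))"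
proof -
  note N = iterated_ln_bounds[OF assms]
  have sq: "(x powr e)\<^sup>2 = x powr (2 * e)" if "0 < x" for x e :: real
    using that by (simp add: power2_eq_square flip: powr_add)
  have "ln (ln N) powr (2 * sig AA N) = ln (ln N) powr (1 + 2 * AA / ln (ln N))"
    unfolding sig_def by (simp add: algebra_simps)
  also have "\<dots> = ln (ln N) * ln (ln N) powr (2 * AA / ln (ln N))"
    using N by (simp add: powr_add)
  also have "ln (ln N) powr (2 * AA / ln (ln N)) = exp (2 * AA * ln (ln (ln N)) / ln (ln N))"
    using N by (simp add: powr_def)
  finally have "ln (ln N) powr (2 * sig AA N) = ln (ln N) * exp (2 * AA * ln (ln (ln N)) / ln (ln N))" .
  thus ?thesis
    using N unfolding fp_scale_def delta_scale_def
    by (simp add: power_mult_distrib power_divide sq algebra_simps)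
qed

lemma fp_scale_le:
  assumes "AA \<ge> 0" "exp (exp 1) \<le> ln N" "AA / ln (ln N) \<le> 1/2"
  shows "fp_scale AA N \<le> delta_scale AA N * (ln (ln N) * ln (ln (ln N)) * exp AA / sqrt (ln N))"
proof -
  note N = iterated_ln_bounds[OF assms(2)]
  note s = sig_bounds[OF assms(1) _ assms(3)]
  define M where "M = ln N powr (1 - sig AA N)"
  have M: "M = exp (- AA) * sqrt (ln N)"
  proof -
    have "M = ln N powr (1/2) / ln N powr (AA / ln (ln N))"
      unfolding M_def sig_def by (simp add: algebra_simps flip: powr_diff)
    also have "ln N powr (AA / ln (ln N)) = exp AA" using N by (simp add: powr_def)
    finally show ?thesis using N by (simp add: powr_half_sqrt exp_minus field_simps)
  qed
  have "ln (ln N) powr sig AA N \<le> ln (ln N) powr 1"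
    using N s by (intro powr_mono) auto
  moreover have "1 \<le> ln (ln (ln N)) powr (1 - sig AA N)"
    using N s by (intro ge_one_powr_ge_zero) auto
  ultimately have "fp_scale AA N \<le> M * ln (ln N) / 1"
    unfolding fp_scale_def M_def[symmetric] using N
    by (intro frac_le mult_left_mono) (auto simp: M_def)
  also have "\<dots> = exp (-2 * AA) * ln N / ln (ln (ln N)) * (ln (ln N) * ln (ln (ln N)) * exp AA / sqrt (ln N))"
  proof -
    have "sqrt (ln N) * sqrt (ln N) = ln N" "exp (AA * 2) = exp AA * exp AA"
      using N by (simp_all flip: exp_add)
    thus ?thesis unfolding M using N by (simp add: exp_minus field_simps)
  qed
  also have "\<dots> \<le> delta_scale AA N * (ln (ln N) * ln (ln (ln N)) * exp AA / sqrt (ln N))"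
    using delta_scale_ge[OF assms] N by (intro mult_right_mono) auto
  finally show ?thesis .
qed

lemma sum_term_prime_Pk_le_Delta:
  assumes "AA > 0" "exp (exp 1) \<le> ln N" "AA / ln (ln N) \<le> 1/2" "1 \<le> real k" "real k \<le> ln (ln N)"
    and mertens: "\<forall>x\<ge>ln N * ln (ln N).
          (\<Sum>p | prime p \<and> x < real p \<and> real p \<le> exp 1 * x. 1 / real p) \<le> 17/10 / ln x"
    and G: "17/10 * exp (-2 * AA) * (exp (2 * AA * ln (ln (ln N)) / ln (ln N))
              + ln (ln N) * ln (ln (ln N)) * exp AA / sqrt (ln N)) \<le> \<rho> * a"
  shows "(\<Sum>p\<in>PP gam N \<inter> Pk N k. term_prime AA N p) \<le> \<rho> * Delta AA a N k"
proof -
  note N = iterated_ln_bounds[OF assms(2)]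
  define C where "C = fp_scale AA N"
  define Q where "Q = delta_scale AA N"
  define E where "E = ln (ln N) * ln (ln (ln N)) * exp AA / sqrt (ln N)"
  have "exp 1 \<le> ln N" by (rule order_trans[OF _ assms(2)]) simp
  have k: "0 < real k" "real k * real k \<le> real k * ln (ln N)"
    using assms(4,5) by auto
  have C_sq: "(C / real k)\<^sup>2 / ln (ln N) = Q / (real k)\<^sup>2 * exp (2 * AA * ln (ln (ln N)) / ln (ln N))"
    unfolding C_def Q_def using fp_scale_sq[OF assms(2)] N by (simp add: power_divide field_simps)
  have "C / real k / ln (ln N) \<le> C / (real k)\<^sup>2"
    using k N mult_right_mono[OF assms(5) fp_scale_nonneg[of AA N]] unfolding C_def
    by (simp add: power2_eq_square field_simps mult.commute)
  also have "\<dots> \<le> Q * E / (real k)\<^sup>2"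
    unfolding C_def Q_def E_def using assms by (intro divide_right_mono fp_scale_le) auto
  finally have "((C / real k)\<^sup>2 + C / real k) / ln (ln N)
      \<le> Q / (real k)\<^sup>2 * (exp (2 * AA * ln (ln (ln N)) / ln (ln N)) + E)"
    using C_sq by (simp add: add_divide_distrib distrib_left)
  hence "17/10 * exp (-2 * AA) * (((C / real k)\<^sup>2 + C / real k) / ln (ln N))
      \<le> 17/10 * exp (-2 * AA) * (Q / (real k)\<^sup>2 * (exp (2 * AA * ln (ln (ln N)) / ln (ln N)) + E))"
    by (rule mult_left_mono) simp
  hence "17/10 * exp (-2 * AA) * ((C / real k)\<^sup>2 + C / real k) / ln (ln N)
      \<le> Q / (real k)\<^sup>2 * (17/10 * exp (-2 * AA) * (exp (2 * AA * ln (ln (ln N)) / ln (ln N)) + E))"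
    by (simp add: mult_ac)
  also have "\<dots> \<le> Q / (real k)\<^sup>2 * (\<rho> * a)"
    using G delta_scale_nonneg[of AA N] unfolding Q_def E_def by (intro mult_left_mono) auto
  also have "\<dots> = \<rho> * Delta AA a N k" unfolding Q_def Delta_eq by simp
  finally show ?thesis
    using sum_term_prime_Pk_le[OF assms(1) \<open>exp 1 \<le> ln N\<close> assms(4) mertens, of gam]
    unfolding C_def by linarith
qed

lemma Delta_ge:
  assumes "AA \<ge> 0" "exp (exp 1) \<le> ln N" "AA / ln (ln N) \<le> 1/2" "a \<ge> 0" "1 \<le> real k" "real k \<le> ln (ln N)"
  shows "a * exp (-2 * AA) * ln N / ((ln (ln N))\<^sup>2 * ln (ln (ln N))) \<le> Delta AA a N k"
proof -
  note N = iterated_ln_bounds[OF assms(2)]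
  have "a * exp (-2 * AA) * ln N / ((ln (ln N))\<^sup>2 * ln (ln (ln N)))
      = a * (exp (-2 * AA) * ln N / ln (ln (ln N))) / (ln (ln N))\<^sup>2"
    by (simp add: field_simps)
  also have "\<dots> \<le> a * delta_scale AA N / (real k)\<^sup>2"
    using delta_scale_ge[OF assms(1-3)] delta_scale_nonneg[of AA N] assms N
    by (intro frac_le mult_left_mono power_mono) auto
  also have "\<dots> = Delta AA a N k" by (simp add: Delta_eq)
  finally show ?thesis .
qed

lemma term_prime_nonneg:
  assumes "AA > 0" "exp 1 \<le> ln N" "p \<in> PP gam N"
  shows "0 \<le> term_prime AA N p"
  using assms term_prime_bounds(1)[of AA N 1 p] by (simp add: PP_def)

lemma sum_prod_term_prime_Pk_le:
  assumes "AA > 0" "a > 0" "0 < \<rho>" "\<rho> < 1" "exp (exp 1) \<le> ln N" "AA / ln (ln N) \<le> 1/2"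
    "1 \<le> real k" "real k \<le> ln (ln N)"
    and mertens: "\<forall>x\<ge>ln N * ln (ln N).
          (\<Sum>p | prime p \<and> x < real p \<and> real p \<le> exp 1 * x. 1 / real p) \<le> 17/10 / ln x"
    and G: "17/10 * exp (-2 * AA) * (exp (2 * AA * ln (ln (ln N)) / ln (ln N))
              + ln (ln N) * ln (ln (ln N)) * exp AA / sqrt (ln N)) \<le> \<rho> * a"
  shows "(\<Sum>T | T \<subseteq> PP gam N \<and> Delta AA a N k \<le> real (card (T \<inter> Pk N k)). \<Prod>p\<in>T. term_prime AA N p)
         \<le> exp (- (\<rho> - 1 - ln \<rho>) * (a * exp (-2 * AA) * ln N / ((ln (ln N))\<^sup>2 * ln (ln (ln N)))))
             * (\<Prod>p\<in>PP gam N. 1 + term_prime AA N p)"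
proof -
  have "exp 1 \<le> ln N" by (rule order_trans[OF _ assms(5)]) simp
  hence tt: "\<And>p. p \<in> PP gam N \<Longrightarrow> 0 \<le> term_prime AA N p"
    using assms(1) by (intro term_prime_nonneg)
  have "(\<Sum>T | T \<subseteq> PP gam N \<and> Delta AA a N k \<le> real (card (T \<inter> Pk N k)). \<Prod>p\<in>T. term_prime AA N p)
      \<le> exp (- (\<rho> - 1 - ln \<rho>) * Delta AA a N k) * (\<Prod>p\<in>PP gam N. 1 + term_prime AA N p)"
    using assms tt by (intro sum_subsets_card_inter_ge_le_exp finite_PP sum_term_prime_Pk_le_Delta) auto
  also have "\<dots> \<le> exp (- (\<rho> - 1 - ln \<rho>) * (a * exp (-2 * AA) * ln N / ((ln (ln N))\<^sup>2 * ln (ln (ln N)))))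
             * (\<Prod>p\<in>PP gam N. 1 + term_prime AA N p)"
  proof (intro mult_right_mono)
    have "0 < \<rho> - 1 - ln \<rho>" using assms(3,4) ln_less_minus_one[of \<rho>] by simp
    hence "(\<rho> - 1 - ln \<rho>) * (a * exp (-2 * AA) * ln N / ((ln (ln N))\<^sup>2 * ln (ln (ln N))))
        \<le> (\<rho> - 1 - ln \<rho>) * Delta AA a N k"
      using Delta_ge[of AA N a k] assms by (intro mult_left_mono) auto
    thus "exp (- (\<rho> - 1 - ln \<rho>) * Delta AA a N k)
        \<le> exp (- (\<rho> - 1 - ln \<rho>) * (a * exp (-2 * AA) * ln N / ((ln (ln N))\<^sup>2 * ln (ln (ln N)))))"
      by (subst exp_le_cancel_iff) linarith
    show "0 \<le> (\<Prod>p\<in>PP gam N. 1 + term_prime AA N p)"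
      using tt by (intro prod_nonneg) (auto intro: add_nonneg_nonneg)
  qed
  finally show ?thesis .
qed

lemma nat_floor_powr_le:
  assumes "1 \<le> x" "g \<le> 1"
  shows "real (nat \<lfloor>x powr g\<rfloor>) \<le> x"
proof -
  have "real (nat \<lfloor>x powr g\<rfloor>) \<le> x powr g" by (intro of_nat_floor) simp
  also have "\<dots> \<le> x powr 1" using assms by (intro powr_mono) auto
  finally show ?thesis using assms by simp
qed

lemma sum_prod_term_prime_not_MM_le:
  assumes "AA > 0" "gam \<le> 1" "a > 0" "0 < \<rho>" "\<rho> < 1" "exp (exp 1) \<le> ln N" "AA / ln (ln N) \<le> 1/2"
    and mertens: "\<forall>x\<ge>ln N * ln (ln N).
          (\<Sum>p | prime p \<and> x < real p \<and> real p \<le> exp 1 * x. 1 / real p) \<le> 17/10 / ln x"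
    and G: "17/10 * exp (-2 * AA) * (exp (2 * AA * ln (ln (ln N)) / ln (ln N))
              + ln (ln N) * ln (ln (ln N)) * exp AA / sqrt (ln N)) \<le> \<rho> * a"
  shows "\<bar>\<Sum>T | T \<subseteq> PP gam N \<and> (\<exists>k\<in>{1..nat \<lfloor>ln (ln N) powr gam\<rfloor>}. Delta AA a N k \<le> real (card (T \<inter> Pk N k))).
            \<Prod>p\<in>T. term_prime AA N p\<bar>
         \<le> ln (ln N) * exp (- (\<rho> - 1 - ln \<rho>) * (a * exp (-2 * AA) * ln N / ((ln (ln N))\<^sup>2 * ln (ln (ln N)))))
             * \<bar>\<Prod>p\<in>PP gam N. 1 + term_prime AA N p\<bar>"
proof -
  define K where "K = nat \<lfloor>ln (ln N) powr gam\<rfloor>"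
  define B where "B = exp (- (\<rho> - 1 - ln \<rho>) * (a * exp (-2 * AA) * ln N / ((ln (ln N))\<^sup>2 * ln (ln (ln N)))))
                        * (\<Prod>p\<in>PP gam N. 1 + term_prime AA N p)"
  define S where "S k = {T. T \<subseteq> PP gam N \<and> Delta AA a N k \<le> real (card (T \<inter> Pk N k))}" for k
  have "exp 1 \<le> ln N" by (rule order_trans[OF _ assms(6)]) simp
  hence tt: "\<And>p. p \<in> PP gam N \<Longrightarrow> 0 \<le> term_prime AA N p"
    using assms(1) by (intro term_prime_nonneg)
  have prod_tt: "0 \<le> (\<Prod>p\<in>T. term_prime AA N p)" if "T \<subseteq> PP gam N" for T
    using that tt by (intro prod_nonneg) auto
  have K: "real K \<le> ln (ln N)"
    unfolding K_def using iterated_ln_bounds[OF assms(6)] assms(2) by (intro nat_floor_powr_le) auto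
  have P: "0 \<le> (\<Prod>p\<in>PP gam N. 1 + term_prime AA N p)"
    using tt by (intro prod_nonneg) (auto intro: add_nonneg_nonneg)
  hence "0 \<le> B" unfolding B_def by simp
  have "(\<Sum>T | T \<subseteq> PP gam N \<and> (\<exists>k\<in>{1..K}. Delta AA a N k \<le> real (card (T \<inter> Pk N k))).
          \<Prod>p\<in>T. term_prime AA N p) \<le> (\<Sum>k\<in>{1..K}. \<Sum>T\<in>S k. \<Prod>p\<in>T. term_prime AA N p)"
    using sum_ex_le_sum_sum[of "Pow (PP gam N)" "{1..K}" "\<lambda>T. \<Prod>p\<in>T. term_prime AA N p"
        "\<lambda>k T. Delta AA a N k \<le> real (card (T \<inter> Pk N k))"] finite_PP prod_tt
    unfolding S_def by simp
  also have "\<dots> \<le> (\<Sum>k\<in>{1..K}. B)"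
    unfolding S_def B_def using assms K
    by (intro sum_mono sum_prod_term_prime_Pk_le) auto
  also have "\<dots> \<le> ln (ln N) * B" using K \<open>0 \<le> B\<close> by (simp add: mult_right_mono)
  finally have "(\<Sum>T | T \<subseteq> PP gam N \<and> (\<exists>k\<in>{1..K}. Delta AA a N k \<le> real (card (T \<inter> Pk N k))).
      \<Prod>p\<in>T. term_prime AA N p) \<le> ln (ln N) * B" .
  moreover have "0 \<le> (\<Sum>T | T \<subseteq> PP gam N \<and> (\<exists>k\<in>{1..K}. Delta AA a N k \<le> real (card (T \<inter> Pk N k))).
      \<Prod>p\<in>T. term_prime AA N p)"
    using prod_tt by (intro sum_nonneg) auto
  ultimately show ?thesis using P unfolding K_def B_def by (simp add: mult.assoc)
qed

lemma eventually_sum_prod_term_prime_not_MM_le: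
  assumes "AA > 0" "gam \<le> 1" "a > 0" "0 < \<rho>" "\<rho> < 1" "17/10 * exp (-2 * AA) < \<rho> * a"
  shows "eventually (\<lambda>N.
           \<bar>\<Sum>T | T \<subseteq> PP gam N \<and> (\<exists>k\<in>{1..nat \<lfloor>ln (ln N) powr gam\<rfloor>}. Delta AA a N k \<le> real (card (T \<inter> Pk N k))).
              \<Prod>p\<in>T. term_prime AA N p\<bar>
           \<le> ln (ln N) * exp (- (\<rho> - 1 - ln \<rho>) * (a * exp (-2 * AA) * ln N / ((ln (ln N))\<^sup>2 * ln (ln (ln N)))))
               * \<bar>\<Prod>p\<in>PP gam N. 1 + term_prime AA N p\<bar>) at_top"
proof -
  have "((\<lambda>N::real. 17/10 * exp (-2 * AA) * (exp (2 * AA * ln (ln (ln N)) / ln (ln N))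
            + ln (ln N) * ln (ln (ln N)) * exp AA / sqrt (ln N))) \<longlongrightarrow> 17/10 * exp (-2 * AA) * (1 + 0)) at_top"
    (is "(?G \<longlongrightarrow> _) _") by real_asymp
  moreover have "17/10 * exp (-2 * AA) * (1 + 0) < \<rho> * a" using assms(6) by simp
  ultimately have "eventually (\<lambda>N. ?G N < \<rho> * a) at_top" by (rule order_tendstoD(2))
  hence G: "eventually (\<lambda>N::real. 17/10 * exp (-2 * AA) * (exp (2 * AA * ln (ln (ln N)) / ln (ln N))
            + ln (ln N) * ln (ln (ln N)) * exp AA / sqrt (ln N)) \<le> \<rho> * a) at_top"
    by (rule eventually_mono) simp
  have "filterlim (\<lambda>N::real. ln N * ln (ln N)) at_top at_top" by real_asymp
  hence mertens: "eventually (\<lambda>N. \<forall>x\<ge>ln N * ln (ln N).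
          (\<Sum>p | prime p \<and> x < real p \<and> real p \<le> exp 1 * x. 1 / real p) \<le> 17/10 / ln x) at_top"
    by (rule eventually_compose_filterlim[OF eventually_sum_inverse_primes_le])
  have "eventually (\<lambda>N::real. exp (exp 1) \<le> ln N) at_top" by real_asymp
  moreover have "eventually (\<lambda>N::real. AA / ln (ln N) \<le> 1/2) at_top" by real_asymp
  ultimately show ?thesis using G mertens
    by eventually_elim (use sum_prod_term_prime_not_MM_le[OF assms(1-5)] in blast)
qed

lemma smallo_divide_if_le_vanishing_multiple:
  fixes f g h r :: "'a \<Rightarrow> real"
  assumes "eventually (\<lambda>x. \<bar>f x\<bar> \<le> r x * \<bar>g x\<bar>) F" "(r \<longlongrightarrow> 0) F"
  shows "(\<lambda>x. f x / h x) \<in> o[F](\<lambda>x. g x / h x)"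
proof (rule landau_o.smallI)
  fix c :: real assume "c > 0"
  with assms(2) have "eventually (\<lambda>x. r x < c) F" by (rule order_tendstoD)
  with assms(1) show "eventually (\<lambda>x. norm (f x / h x) \<le> c * norm (g x / h x)) F"
  proof eventually_elim
    case (elim x)
    have "\<bar>f x\<bar> \<le> c * \<bar>g x\<bar>"
      using elim order_trans mult_right_mono[of "r x" c "\<bar>g x\<bar>"] by force
    hence "\<bar>f x\<bar> / \<bar>h x\<bar> \<le> c * \<bar>g x\<bar> / \<bar>h x\<bar>" by (rule divide_right_mono) simp
    thus ?case by (simp add: abs_divide)
  qed
qed

lemma tendsto_ln_ln_mult_exp_0:
  fixes AA a c :: real
  assumes "0 < c" "0 < a"
  shows "((\<lambda>N. ln (ln N) * exp (- c * (a * exp (-2 * AA) * ln N / ((ln (ln N))\<^sup>2 * ln (ln (ln N))))))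
           \<longlongrightarrow> 0) at_top"
proof -
  define \<kappa> where "\<kappa> = c * (a * exp (-2 * AA))"
  have "0 < \<kappa>" unfolding \<kappa>_def using assms by simp
  hence "((\<lambda>N. ln (ln N) * exp (- \<kappa> * (ln N / ((ln (ln N))\<^sup>2 * ln (ln (ln N)))))) \<longlongrightarrow> 0) at_top"
    by real_asymp
  thus ?thesis
    unfolding \<kappa>_def by (simp only: times_divide_eq_right mult_minus_left mult.assoc)
qed

theorem proposition3p2:
  fixes AA gam a :: real
  assumes "AA > 0"
    and "0 < gam" and "gam < 1 / (exp 1 - 1)"
    and "exp 1 - 1 < a" and "a < 1 / gam"
  shows "(\<lambda>N. (\<Sum>\<^sub>\<infinity>n\<in>{n. n \<ge> 1 \<and> n \<notin> MM AA gam a N}. term_n AA gam N n)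
               / (\<Sum>\<^sub>\<infinity>n\<in>{n. n \<ge> 1}. (ff AA gam N n)\<^sup>2))
         \<in> o[at_top](\<lambda>N. AN AA gam N)"
proof -
  \<comment> \<open>only \<open>gam \<le> 1\<close> and \<open>a > 17/10\<close> are needed, not \<open>0 < gam\<close> or \<open>a < 1 / gam\<close>\<close>
  have e: "27/10 \<le> exp (1::real)" using e_approx_32 by (simp add: abs_if split: if_split_asm)
  hence "1 / (exp 1 - 1) \<le> (1::real)" by (simp add: divide_le_eq)
  hence "gam \<le> 1" using assms(3) by linarith
  have "17/10 < a" using e assms(4) by linarith
  moreover have "exp (-2 * AA) < 1" using assms(1) by simp
  ultimately have "0 < a" "17/10 * exp (-2 * AA) < a" by linarith+
  hence "17/10 * exp (-2 * AA) / a < 1" by (simp only: divide_less_eq_1_pos)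
  then obtain \<rho> where \<rho>: "17/10 * exp (-2 * AA) / a < \<rho>" "\<rho> < 1" using dense by blast
  have "0 < 17/10 * exp (-2 * AA) / a" using \<open>0 < a\<close> by simp
  hence "0 < \<rho>" using \<rho>(1) by linarith
  have mean: "17/10 * exp (-2 * AA) < \<rho> * a" using \<rho>(1) \<open>0 < a\<close> by (simp add: divide_less_eq)
  have "0 < \<rho> - 1 - ln \<rho>" using ln_less_minus_one[of \<rho>] \<rho> \<open>0 < \<rho>\<close> by simp
  show ?thesis
    unfolding AN_def infsum_term_n_eq_prod infsum_term_n_not_MM
    by (rule smallo_divide_if_le_vanishing_multiple[OF
          eventually_sum_prod_term_prime_not_MM_le[OF assms(1) \<open>gam \<le> 1\<close> \<open>0 < a\<close> \<open>0 < \<rho>\<close> \<rho>(2) mean]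
          tendsto_ln_ln_mult_exp_0[OF \<open>0 < \<rho> - 1 - ln \<rho>\<close> \<open>0 < a\<close>]])
qed

end
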